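(* Let $\Lambda$ be the join of the complements of finitely many path graphs and let $\Gamma$ be a finite simple graph. Suppose that $\psi\colon A(\Lambda)\to A(\Gamma)$ is an injective homomorphism satisfying condition (KK). Then there is a full embedding $\iota\colon\Lambda\to\Gamma$ with $\iota(V(\Lambda))\subset\mathrm{supp}(\psi)$.
   Context: $A(\Gamma) = \langle V(\Gamma) \mid uv=vu \text{ whenever } \{u,v\}\in E(\Gamma)\rangle$ is the right-angled Artin group. The path graph $P_n$ ($n\ge1$) has vertices $x_1,\dots,x_n$ and edges $\{x_i,x_{i+1}\}$; the complement $\Lambda^c$ of a graph has the same vertices, two distinct vertices adjacent iff non-adjacent in $\Lambda$. The join $\Lambda_1*\cdots*\Lambda_m$ is obtained from the disjoint union by joining every vertex of $\Lambda_i$ to every vertex of $\Lambda_j$ for $i\ne j$. A graph embedding is an injective vertex map preserving adjacency; it is full if it also preserves non-adjacency. The support $\mathrm{supp}(g)$ of $g\in A(\Gamma)$ is the set of vertices $v$ such that $v$ or $v^{-1}$ occurs in a (equivalently, any) shortest word representing $g$; for a homomorphism $\psi\colon A(\Lambda)\to A(\Gamma)$, $\mathrm{supp}(\psi)=\bigcup_{v\in V(\Lambda)}\mathrm{supp}(\psi(v))$. A homomorphism $\psi$ satisfies condition (KK) if for every $v\in V(\Lambda)$ the set $\mathrm{supp}(\psi(v))$ consists of mutually adjacent vertices of $\Gamma$. *)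

theory Defs
  imports Main
begin

definition finite_simple_graph :: "'v set \<Rightarrow> ('v \<Rightarrow> 'v \<Rightarrow> bool) \<Rightarrow> bool" where
  "finite_simple_graph V E \<longleftrightarrow> finite V \<and> (\<forall>u v. E u v \<longrightarrow> u \<in> V \<and> v \<in> V)
     \<and> (\<forall>u v. E u v \<longrightarrow> E v u) \<and> (\<forall>v. \<not> E v v)"

text \<open>Words in the generators and their inverses: a letter (v, False) is v,
(v, True) is v inverse.\<close>

type_synonym 'v word = "('v \<times> bool) list"

inductive raag_step :: "('v \<Rightarrow> 'v \<Rightarrow> bool) \<Rightarrow> 'v word \<Rightarrow> 'v word \<Rightarrow> bool"
  for E where
  cancel: "raag_step E (xs @ [(v, b), (v, \<not> b)] @ ys) (xs @ ys)"
| commute: "E u v \<Longrightarrow> raag_step E (xs @ [(u, a), (v, b)] @ ys) (xs @ [(v, b), (u, a)] @ ys)"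

definition raag_eq :: "('v \<Rightarrow> 'v \<Rightarrow> bool) \<Rightarrow> 'v word \<Rightarrow> 'v word \<Rightarrow> bool" where
  "raag_eq E = equivclp (raag_step E)"

definition word_over :: "'v set \<Rightarrow> 'v word \<Rightarrow> bool" where
  "word_over V w \<longleftrightarrow> fst ` set w \<subseteq> V"

definition inv_word :: "'v word \<Rightarrow> 'v word" where
  "inv_word w = rev (map (\<lambda>(v, b). (v, \<not> b)) w)"

text \<open>A homomorphism A(Lambda) -> A(Gamma) is given by choosing, for each generator,
a word representing its image; it extends to words as follows.\<close>
definition hom_ext :: "('a \<Rightarrow> 'b word) \<Rightarrow> 'a word \<Rightarrow> 'b word" where
  "hom_ext f w = concat (map (\<lambda>(v, b). if b then inv_word (f v) else f v) w)"

definition raag_hom :: "'a set \<Rightarrow> ('a \<Rightarrow> 'a \<Rightarrow> bool) \<Rightarrow> 'b set \<Rightarrow> ('b \<Rightarrow> 'b \<Rightarrow> bool)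
    \<Rightarrow> ('a \<Rightarrow> 'b word) \<Rightarrow> bool" where
  "raag_hom VL EL VG EG f \<longleftrightarrow> (\<forall>v\<in>VL. word_over VG (f v))
     \<and> (\<forall>u\<in>VL. \<forall>v\<in>VL. EL u v \<longrightarrow> raag_eq EG (f u @ f v) (f v @ f u))"

definition raag_hom_injective :: "'a set \<Rightarrow> ('a \<Rightarrow> 'a \<Rightarrow> bool) \<Rightarrow> ('b \<Rightarrow> 'b \<Rightarrow> bool)
    \<Rightarrow> ('a \<Rightarrow> 'b word) \<Rightarrow> bool" where
  "raag_hom_injective VL EL EG f \<longleftrightarrow>
     (\<forall>w1 w2. word_over VL w1 \<longrightarrow> word_over VL w2 \<longrightarrow>
        raag_eq EG (hom_ext f w1) (hom_ext f w2) \<longrightarrow> raag_eq EL w1 w2)"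

text \<open>Support of the element represented by w: vertices occurring in a shortest
representative word (equivalently in any shortest one).\<close>
definition geodesic_rep :: "('v \<Rightarrow> 'v \<Rightarrow> bool) \<Rightarrow> 'v word \<Rightarrow> 'v word \<Rightarrow> bool" where
  "geodesic_rep E w w' \<longleftrightarrow> raag_eq E w w' \<and> (\<forall>w''. raag_eq E w w'' \<longrightarrow> length w' \<le> length w'')"

definition raag_supp :: "('v \<Rightarrow> 'v \<Rightarrow> bool) \<Rightarrow> 'v word \<Rightarrow> 'v set" where
  "raag_supp E w = {v. \<exists>w'. geodesic_rep E w w' \<and> v \<in> fst ` set w'}"

definition hom_supp :: "'a set \<Rightarrow> ('b \<Rightarrow> 'b \<Rightarrow> bool) \<Rightarrow> ('a \<Rightarrow> 'b word) \<Rightarrow> 'b set" where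
  "hom_supp VL EG f = (\<Union>v\<in>VL. raag_supp EG (f v))"

definition KK_condition :: "'a set \<Rightarrow> ('b \<Rightarrow> 'b \<Rightarrow> bool) \<Rightarrow> ('a \<Rightarrow> 'b word) \<Rightarrow> bool" where
  "KK_condition VL EG f \<longleftrightarrow>
     (\<forall>v\<in>VL. \<forall>x\<in>raag_supp EG (f v). \<forall>y\<in>raag_supp EG (f v). x \<noteq> y \<longrightarrow> EG x y)"

definition full_embedding :: "'a set \<Rightarrow> ('a \<Rightarrow> 'a \<Rightarrow> bool) \<Rightarrow> 'b set \<Rightarrow> ('b \<Rightarrow> 'b \<Rightarrow> bool)
    \<Rightarrow> ('a \<Rightarrow> 'b) \<Rightarrow> bool" where
  "full_embedding VL EL VG EG \<iota> \<longleftrightarrow> inj_on \<iota> VL \<and> \<iota> ` VL \<subseteq> VG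
     \<and> (\<forall>u\<in>VL. \<forall>v\<in>VL. EG (\<iota> u) (\<iota> v) \<longleftrightarrow> EL u v)"

text \<open>The join P_{n 0}^c * ... * P_{n (m-1)}^c: vertex (i, j) is x_j of the i-th path,
1 <= j <= n i.\<close>
definition join_pc_V :: "nat \<Rightarrow> (nat \<Rightarrow> nat) \<Rightarrow> (nat \<times> nat) set" where
  "join_pc_V m n = {(i, j). i < m \<and> 1 \<le> j \<and> j \<le> n i}"

definition join_pc_E :: "nat \<Rightarrow> (nat \<Rightarrow> nat) \<Rightarrow> nat \<times> nat \<Rightarrow> nat \<times> nat \<Rightarrow> bool" where
  "join_pc_E m n p q \<longleftrightarrow> p \<in> join_pc_V m n \<and> q \<in> join_pc_V m n \<and>
     (fst p \<noteq> fst q \<or> (fst p = fst q \<and> snd p \<noteq> snd q \<and> snd p \<noteq> snd q + 1 \<and> snd q \<noteq> snd p + 1))"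

end

theory Submission
  imports Defs
begin

text \<open>By condition (KK), each \<open>\<psi> v\<close> lies in the free abelian subgroup generated by the clique
  \<open>supp v\<close> of generators with nonzero exponent sum, so \<open>\<psi> v\<close> is a product of powers of these,
  and \<open>supp v\<close> is exactly the support of \<open>\<psi> v\<close>.  If \<open>u\<close> and \<open>v\<close> are adjacent in \<open>\<Lambda>\<close>, every
  \<open>s \<in> supp u\<close> commutes with every \<open>t \<in> supp v\<close>, since projecting to the free group on \<open>{s, t}\<close>
  would otherwise give commuting powers of two free generators.

  For a factor \<open>P\<^sub>n\<^sup>c\<close> with \<open>n \<ge> 2\<close> one then finds an anti-path \<open>y\<^sub>1, \<dots>, y\<^sub>n\<close> with
  \<open>y\<^sub>j \<in> supp x\<^sub>j\<close>: consecutive \<open>y\<^sub>j\<close> do not commute, while those two or more steps apart commute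
  and are distinct.  Non-commuting chains through the supports exist because \<open>\<psi>\<close> is injective
  on the nested conjugates \<open>x\<^sub>k\<^sub>+\<^sub>1 \<cdots> x\<^sub>1 \<cdots> x\<^sub>k\<^sub>+\<^sub>1\<^sup>-\<^sup>1\<close>, which do not commute with \<open>x\<^sub>k\<^sub>+\<^sub>2\<close>;
  the case \<open>n = 3\<close> needs a separate argument with a nested commutator.  The singleton factors
  generate a free abelian group of rank \<open>k\<close>, so the pairwise commuting set formed by their
  supports and the generators commuting with all supports has at least \<open>k\<close> elements.  Sending \<open>x\<^sub>j\<close> to \<open>y\<^sub>j\<close>
  and the singleton factors to these generators is a full embedding.\<close>

definition commuting :: "('v \<Rightarrow> 'v \<Rightarrow> bool) \<Rightarrow> 'v \<Rightarrow> 'v \<Rightarrow> bool" where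
  "commuting E x y \<longleftrightarrow> x = y \<or> E x y"

definition letters :: "'v word \<Rightarrow> 'v set" where
  "letters w = fst ` set w"

definition inv_letter :: "'v \<times> bool \<Rightarrow> 'v \<times> bool" where
  "inv_letter l = (fst l, \<not> snd l)"

lemma letters_simps[simp]: "letters [] = {}" "letters (l # w) = insert (fst l) (letters w)"
  "letters (a @ b) = letters a \<union> letters b"
  by (auto simp: letters_def)

lemma inv_letter_inv_letter[simp]: "inv_letter (inv_letter l) = l" by (simp add: inv_letter_def)

lemma inv_word_simps[simp]: "inv_word [] = []" "inv_word (l # w) = inv_word w @ [inv_letter l]"
  "inv_word (a @ b) = inv_word b @ inv_word a"
  by (auto simp: inv_word_def inv_letter_def split: prod.splits)

lemma inv_word_inv_word[simp]: "inv_word (inv_word w) = w"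
  by (induction w) auto

lemma letters_inv_word[simp]: "letters (inv_word w) = letters w"
  by (induction w) (auto simp: inv_letter_def)

lemma inv_word_rev: "inv_word w = rev (map inv_letter w)"
  by (induction w) auto

lemma hd_inv_word: "w \<noteq> [] \<Longrightarrow> hd (inv_word w) = inv_letter (last w)"
  by (simp add: inv_word_rev hd_rev last_map)

lemma last_inv_word: "w \<noteq> [] \<Longrightarrow> last (inv_word w) = inv_letter (hd w)"
  by (simp add: inv_word_rev last_rev hd_map)

lemma raag_eq_refl[simp, intro]: "raag_eq E w w"
  by (simp add: raag_eq_def)

lemma raag_eq_sym[sym]: "raag_eq E a b \<Longrightarrow> raag_eq E b a"
  unfolding raag_eq_def by (rule equivclp_sym)

lemma raag_eq_trans[trans]: "raag_eq E a b \<Longrightarrow> raag_eq E b c \<Longrightarrow> raag_eq E a c"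
  unfolding raag_eq_def by (rule equivclp_trans)

lemma raag_eq_step: "raag_step E a b \<Longrightarrow> raag_eq E a b"
  unfolding raag_eq_def by (rule r_into_equivclp)

lemma equivclp_map:
  assumes "equivclp r x y" and "\<And>x y. r x y \<Longrightarrow> equivclp s (f x) (f y)"
  shows "equivclp s (f x) (f y)"
  using assms(1)
proof (induction rule: equivclp_induct)
  case base then show ?case by simp
next
  case (step y z)
  then show ?case
    by (meson assms(2) equivclp_sym equivclp_trans)
qed

lemma equivclp_invariant:
  assumes "equivclp r x y" and "\<And>x y. r x y \<Longrightarrow> f x = f y"
  shows "f x = f y"
  using assms(1)
proof (induction rule: equivclp_induct)
  case base then show ?case by simp
next
  case (step y z)
  then show ?case using assms(2) by metis
qed

lemma raag_step_ctx: "raag_step E a b \<Longrightarrow> raag_step E (p @ a @ q) (p @ b @ q)"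
proof (induction rule: raag_step.induct)
  case (cancel xs v b ys)
  have "raag_step E ((p @ xs) @ [(v, b), (v, \<not> b)] @ (ys @ q)) ((p @ xs) @ (ys @ q))"
    by (rule raag_step.cancel)
  then show ?case by simp
next
  case (commute u v xs a b ys)
  have "raag_step E ((p @ xs) @ [(u, a), (v, b)] @ (ys @ q)) ((p @ xs) @ [(v, b), (u, a)] @ (ys @ q))"
    using raag_step.commute[of E u v "p @ xs" a b "ys @ q"] commute by simp
  then show ?case by simp
qed

lemma raag_eq_ctx: "raag_eq E a b \<Longrightarrow> raag_eq E (p @ a @ q) (p @ b @ q)"
  unfolding raag_eq_def
  by (erule equivclp_map[where f="\<lambda>x. p @ x @ q"]) (auto intro: raag_step_ctx)

lemma raag_eq_append: "raag_eq E a a' \<Longrightarrow> raag_eq E b b' \<Longrightarrow> raag_eq E (a @ b) (a' @ b')"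
proof -
  assume 1: "raag_eq E a a'" and 2: "raag_eq E b b'"
  have "raag_eq E ([] @ a @ b) ([] @ a' @ b)" by (rule raag_eq_ctx[OF 1])
  moreover have "raag_eq E (a' @ b @ []) (a' @ b' @ [])" by (rule raag_eq_ctx[OF 2])
  ultimately show ?thesis by (auto intro: raag_eq_trans)
qed

lemma raag_eq_Cons: "raag_eq E a a' \<Longrightarrow> raag_eq E (l # a) (l # a')"
  using raag_eq_append[of E "[l]" "[l]" a a'] by simp

lemma raag_eq_cancel2: "raag_eq E ([l, inv_letter l]) []"
proof -
  obtain v b where l: "l = (v, b)" by (cases l)
  have "raag_step E ([] @ [(v, b), (v, \<not> b)] @ []) ([] @ [])" by (rule raag_step.cancel)
  then show ?thesis by (auto simp: l inv_letter_def intro: raag_eq_step)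
qed

lemma raag_eq_cancel_inv: "raag_eq E (w @ inv_word w) []"
proof (induction w)
  case Nil then show ?case by simp
next
  case (Cons l w)
  have "raag_eq E ((l # w) @ inv_word (l # w)) ([l] @ (w @ inv_word w) @ [inv_letter l])" by simp
  also have "raag_eq E \<dots> ([l] @ [] @ [inv_letter l])" by (rule raag_eq_ctx[OF Cons])
  also have "raag_eq E \<dots> []" using raag_eq_cancel2 by simp
  finally show ?case .
qed

lemma raag_step_inv: "raag_step E a b \<Longrightarrow> raag_eq E (inv_word a) (inv_word b)"
proof (induction rule: raag_step.induct)
  case (cancel xs v b ys)
  have "raag_step E (inv_word ys @ [(v, b), (v, \<not> b)] @ inv_word xs) (inv_word ys @ inv_word xs)"
    by (rule raag_step.cancel)
  then show ?case by (auto simp: inv_letter_def intro: raag_eq_step)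
next
  case (commute u v xs a b ys)
  have "raag_step E (inv_word ys @ [(u, \<not>a), (v, \<not>b)] @ inv_word xs) (inv_word ys @ [(v, \<not>b), (u, \<not>a)] @ inv_word xs)"
    using raag_step.commute[of E u v "inv_word ys" "\<not>a" "\<not>b" "inv_word xs"] commute by simp
  then show ?case by (auto simp: inv_letter_def intro!: raag_eq_sym[OF raag_eq_step])
qed

lemma raag_eq_inv: "raag_eq E a b \<Longrightarrow> raag_eq E (inv_word a) (inv_word b)"
  unfolding raag_eq_def
  by (erule equivclp_map[where f=inv_word]) (auto dest: raag_step_inv simp: raag_eq_def)

lemma raag_eq_swap_letters:
  assumes "commuting E u v"
  shows "raag_eq E [(u, a), (v, b)] [(v, b), (u, a)]"
proof (cases "u = v")
  case True
  show ?thesis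
  proof (cases "a = b")
    case True then show ?thesis using \<open>u = v\<close> by simp
  next
    case False
    then have "b = (\<not> a)" by auto
    have 1: "raag_eq E [(u, a), (v, b)] []" using raag_eq_cancel2[of E "(u,a)"] \<open>u = v\<close> \<open>b = (\<not> a)\<close>
      by (simp add: inv_letter_def)
    have 2: "raag_eq E [(v, b), (u, a)] []" using raag_eq_cancel2[of E "(v,b)"] \<open>u = v\<close> \<open>b = (\<not> a)\<close>
      by (simp add: inv_letter_def)
    show ?thesis using 1 2 by (meson raag_eq_sym raag_eq_trans)
  qed
next
  case False
  then have "E u v" using assms by (simp add: commuting_def)
  have "raag_step E ([] @ [(u, a), (v, b)] @ []) ([] @ [(v, b), (u, a)] @ [])"
    using raag_step.commute[of E u v "[]" a b "[]"] \<open>E u v\<close> by simp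
  then show ?thesis by (auto intro: raag_eq_step)
qed

lemma raag_eq_letter_past:
  assumes "\<forall>y\<in>letters w. commuting E x y"
  shows "raag_eq E ((x, b) # w) (w @ [(x, b)])"
  using assms
proof (induction w)
  case Nil then show ?case by simp
next
  case (Cons l w)
  obtain y c where l: "l = (y, c)" by (cases l)
  have "raag_eq E ((x, b) # l # w) ([] @ [(x, b), (y, c)] @ w)" by (simp add: l)
  also have "raag_eq E \<dots> ([] @ [(y, c), (x, b)] @ w)"
    by (rule raag_eq_ctx, rule raag_eq_swap_letters) (use Cons.prems l in auto)
  also have "raag_eq E \<dots> ([(y, c)] @ ((x, b) # w))" by simp
  also have "raag_eq E \<dots> ([(y, c)] @ (w @ [(x, b)]))"
    by (rule raag_eq_append) (use Cons in auto)
  finally show ?case by (simp add: l)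
qed

lemma raag_eq_commute_words:
  assumes "\<forall>x\<in>letters a. \<forall>y\<in>letters b. commuting E x y"
  shows "raag_eq E (a @ b) (b @ a)"
  using assms
proof (induction a)
  case Nil then show ?case by simp
next
  case (Cons l a)
  obtain x c where l: "l = (x, c)" by (cases l)
  have "raag_eq E ((l # a) @ b) ([l] @ (a @ b))" by simp
  also have "raag_eq E \<dots> ([l] @ (b @ a))"
    by (rule raag_eq_append) (use Cons in auto)
  also have "raag_eq E \<dots> (((x, c) # b) @ a)" by (simp add: l)
  also have "raag_eq E \<dots> ((b @ [(x, c)]) @ a)"
    by (rule raag_eq_append, rule raag_eq_letter_past) (use Cons.prems l in auto)
  finally show ?case by (simp add: l)
qed

lemma raag_eq_conj_split:
  assumes "\<forall>x\<in>letters b. \<forall>y\<in>letters w. commuting E x y"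
  shows "raag_eq E ((a @ b) @ w @ inv_word (a @ b)) (a @ w @ inv_word a)"
proof -
  have "(a @ b) @ w @ inv_word (a @ b) = a @ (b @ w) @ inv_word b @ inv_word a" by simp
  also have "raag_eq E \<dots> (a @ (w @ b) @ inv_word b @ inv_word a)"
    by (intro raag_eq_ctx raag_eq_commute_words assms)
  also have "a @ (w @ b) @ inv_word b @ inv_word a = (a @ w) @ (b @ inv_word b) @ inv_word a" by simp
  also have "raag_eq E \<dots> ((a @ w) @ [] @ inv_word a)"
    by (intro raag_eq_ctx raag_eq_cancel_inv)
  finally show ?thesis by simp
qed

definition comm :: "'v word \<Rightarrow> 'v word \<Rightarrow> 'v word" where
  "comm a b = a @ b @ inv_word a @ inv_word b"

lemma letters_comm: "letters (comm a b) = letters a \<union> letters b"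
  by (auto simp: comm_def)

lemma comm_Nil_left: "raag_eq E a [] \<Longrightarrow> raag_eq E (comm a b) []"
proof -
  assume a: "raag_eq E a []"
  have "raag_eq E (comm a b) ([] @ b @ inv_word [] @ inv_word b)"
    unfolding comm_def by (rule raag_eq_append[OF a raag_eq_append[OF raag_eq_refl raag_eq_append[OF raag_eq_inv[OF a] raag_eq_refl]]])
  also have "[] @ b @ inv_word [] @ inv_word b = b @ inv_word b" by simp
  also have "raag_eq E \<dots> []" by (rule raag_eq_cancel_inv)
  finally show ?thesis .
qed

lemma comm_Nil_right: "raag_eq E b [] \<Longrightarrow> raag_eq E (comm a b) []"
proof -
  assume b: "raag_eq E b []"
  have "raag_eq E (comm a b) (a @ [] @ inv_word a @ inv_word [])"
    unfolding comm_def by (rule raag_eq_append[OF raag_eq_refl raag_eq_append[OF b raag_eq_append[OF raag_eq_refl raag_eq_inv[OF b]]]])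
  also have "a @ [] @ inv_word a @ inv_word [] = a @ inv_word a" by simp
  also have "raag_eq E \<dots> []" by (rule raag_eq_cancel_inv)
  finally show ?thesis .
qed

lemma comm_commuting:
  assumes "\<forall>x\<in>letters a. \<forall>y\<in>letters b. commuting E x y"
  shows "raag_eq E (comm a b) []"
proof -
  have "comm a b = (a @ b) @ inv_word a @ inv_word b" by (simp add: comm_def)
  also have "raag_eq E \<dots> ((b @ a) @ inv_word a @ inv_word b)"
    by (rule raag_eq_append[OF raag_eq_commute_words[OF assms] raag_eq_refl])
  also have "(b @ a) @ inv_word a @ inv_word b = b @ (a @ inv_word a) @ inv_word b" by simp
  also have "raag_eq E \<dots> (b @ [] @ inv_word b)" by (rule raag_eq_ctx[OF raag_eq_cancel_inv])
  also have "b @ [] @ inv_word b = b @ inv_word b" by simp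
  also have "raag_eq E \<dots> []" by (rule raag_eq_cancel_inv)
  finally show ?thesis .
qed

definition proj :: "'v set \<Rightarrow> 'v word \<Rightarrow> 'v word" where
  "proj W w = filter (\<lambda>l. fst l \<in> W) w"

lemma proj_simps[simp]: "proj W [] = []" "proj W (a @ b) = proj W a @ proj W b"
  "proj W (l # w) = (if fst l \<in> W then l # proj W w else proj W w)"
  by (auto simp: proj_def)

lemma proj_inv_word[simp]: "proj W (inv_word w) = inv_word (proj W w)"
  by (induction w) (auto simp: inv_letter_def)

lemma letters_proj: "letters (proj W w) = letters w \<inter> W"
  by (auto simp: proj_def letters_def)

lemma proj_proj: "proj A (proj B w) = proj (A \<inter> B) w"
  by (induction w) auto

lemma raag_eq_split:
  assumes "\<forall>x\<in>letters w \<inter> W. \<forall>y\<in>letters w - W. commuting E x y"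
    and sym: "\<And>x y. E x y \<Longrightarrow> E y x"
  shows "raag_eq E w (proj W w @ proj (- W) w)"
  using assms
proof (induction w)
  case Nil then show ?case by simp
next
  case (Cons l w)
  obtain x c where l: "l = (x, c)" by (cases l)
  have IH: "raag_eq E w (proj W w @ proj (- W) w)" using Cons sym by auto
  show ?case
  proof (cases "x \<in> W")
    case True
    have "raag_eq E (l # w) (l # (proj W w @ proj (- W) w))" by (rule raag_eq_Cons[OF IH])
    then show ?thesis using True l by simp
  next
    case False
    have "raag_eq E (l # w) ([] @ ((x, c) # proj W w) @ proj (- W) w)" using IH l
      by (simp add: raag_eq_Cons)
    also have "raag_eq E \<dots> ([] @ (proj W w @ [(x, c)]) @ proj (- W) w)"
    proof (rule raag_eq_ctx, rule raag_eq_letter_past, rule ballI)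
      fix y assume "y \<in> letters (proj W w)"
      then have "y \<in> letters (l # w) \<inter> W" by (auto simp: letters_proj)
      moreover have "x \<in> letters (l # w) - W" using False l by auto
      ultimately have "commuting E y x" using Cons.prems by blast
      then show "commuting E x y" using sym by (auto simp: commuting_def)
    qed
    finally show ?thesis using False l by simp
  qed
qed

lemma raag_eq_decomp:
  assumes "distinct cs" "\<forall>x\<in>letters w. colour x \<in> set cs"
    and "\<forall>x\<in>letters w. \<forall>y\<in>letters w. colour x \<noteq> colour y \<longrightarrow> commuting E x y"
    and sym: "\<And>x y. E x y \<Longrightarrow> E y x"
  shows "raag_eq E w (concat (map (\<lambda>c. proj {x. colour x = c} w) cs))"
  using assms(1-3)
proof (induction cs arbitrary: w)
  case Nil
  then have "w = []" by (cases w) auto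
  then show ?case by simp
next
  case (Cons c cs)
  define W where "W = {x. colour x = c}"
  have e1: "raag_eq E w (proj W w @ proj (- W) w)"
  proof (rule raag_eq_split[OF _ sym])
    show "\<forall>x\<in>letters w \<inter> W. \<forall>y\<in>letters w - W. commuting E x y"
    proof (intro ballI)
      fix x y assume "x \<in> letters w \<inter> W" "y \<in> letters w - W"
      then have "colour x \<noteq> colour y" "x \<in> letters w" "y \<in> letters w" by (auto simp: W_def)
      then show "commuting E x y" by (intro Cons.prems(3)[rule_format])
    qed
  qed
  have e2: "raag_eq E (proj (- W) w) (concat (map (\<lambda>c. proj {x. colour x = c} (proj (- W) w)) cs))"
  proof (rule Cons.IH)
    show "distinct cs" using Cons.prems by simp
    show "\<forall>x\<in>letters (proj (- W) w). colour x \<in> set cs"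
      using Cons.prems(2) by (auto simp: letters_proj W_def)
    show "\<forall>x\<in>letters (proj (- W) w). \<forall>y\<in>letters (proj (- W) w). colour x \<noteq> colour y \<longrightarrow> commuting E x y"
    proof (intro ballI impI)
      fix x y assume "x \<in> letters (proj (- W) w)" "y \<in> letters (proj (- W) w)" "colour x \<noteq> colour y"
      then show "commuting E x y" by (intro Cons.prems(3)[rule_format]) (auto simp: letters_proj)
    qed
  qed
  have e3: "map (\<lambda>c. proj {x. colour x = c} (proj (- W) w)) cs = map (\<lambda>c. proj {x. colour x = c} w) cs"
  proof (rule map_cong[OF refl])
    fix c' assume "c' \<in> set cs"
    then have "c' \<noteq> c" using Cons.prems(1) by auto
    then have "{x. colour x = c'} \<inter> - W = {x. colour x = c'}" by (auto simp: W_def)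
    then show "proj {x. colour x = c'} (proj (- W) w) = proj {x. colour x = c'} w" by (simp add: proj_proj)
  qed
  have "raag_eq E w (proj W w @ concat (map (\<lambda>c. proj {x. colour x = c} w) cs))"
    by (rule raag_eq_trans[OF e1 raag_eq_append[OF raag_eq_refl e2[unfolded e3]]])
  then show ?case by (simp add: W_def)
qed

lemma raag_eq_concat_Nil: "(\<forall>c\<in>set cs. raag_eq E (f c) []) \<Longrightarrow> raag_eq E (concat (map f cs)) []"
proof (induction cs)
  case (Cons c cs)
  then have "raag_eq E (f c @ concat (map f cs)) ([] @ [])"
    by (intro raag_eq_append) auto
  then show ?case by simp
qed simp

definition hom_letter :: "('a \<Rightarrow> 'b word) \<Rightarrow> 'a \<times> bool \<Rightarrow> 'b word" where
  "hom_letter f l = (if snd l then inv_word (f (fst l)) else f (fst l))"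

lemma hom_ext_simps[simp]: "hom_ext f [] = []" "hom_ext f (l # w) = hom_letter f l @ hom_ext f w"
  "hom_ext f (a @ b) = hom_ext f a @ hom_ext f b"
  by (auto simp: hom_ext_def hom_letter_def split: prod.splits)

lemma hom_letter_inv_letter[simp]: "hom_letter f (inv_letter l) = inv_word (hom_letter f l)"
  by (auto simp: hom_letter_def inv_letter_def)

lemma hom_ext_inv[simp]: "hom_ext f (inv_word w) = inv_word (hom_ext f w)"
  by (induction w) auto

lemma letters_hom_ext: "letters (hom_ext f w) \<subseteq> (\<Union>v\<in>letters w. letters (f v))"
  by (induction w) (auto simp: hom_letter_def)

lemma raag_eq_hom_ext:
  assumes "\<forall>v\<in>letters w. raag_eq E (f v) (g v)"
  shows "raag_eq E (hom_ext f w) (hom_ext g w)"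
  using assms
proof (induction w)
  case Nil then show ?case by simp
next
  case (Cons l w)
  have "raag_eq E (hom_letter f l) (hom_letter g l)"
    using Cons.prems by (auto simp: hom_letter_def intro: raag_eq_inv)
  then show ?case using Cons by (auto intro: raag_eq_append)
qed

lemma proj_hom_ext: "proj W (hom_ext f w) = hom_ext (\<lambda>v. proj W (f v)) w"
  by (induction w) (auto simp: hom_letter_def)

lemma hom_ext_proj_single:
  "hom_ext (\<lambda>x. if x \<in> W then [(x, False)] else []) w = proj W w"
  by (induction w) (auto simp: hom_letter_def inv_letter_def)

lemma hom_ext_comm: "hom_ext f (comm a b) = comm (hom_ext f a) (hom_ext f b)"
  by (simp add: comm_def)

definition letter_sign :: "bool \<Rightarrow> int" where "letter_sign b = (if b then -1 else 1)"

definition exp_sum :: "'v word \<Rightarrow> 'v \<Rightarrow> int" where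
  "exp_sum w x = sum_list (map (\<lambda>l. if fst l = x then letter_sign (snd l) else 0) w)"

lemma exp_sum_simps[simp]: "exp_sum [] x = 0" "exp_sum (l # w) x = (if fst l = x then letter_sign (snd l) else 0) + exp_sum w x"
  "exp_sum (a @ b) x = exp_sum a x + exp_sum b x"
  by (auto simp: exp_sum_def)

lemma exp_sum_inv[simp]: "exp_sum (inv_word w) x = - exp_sum w x"
  by (induction w) (auto simp: inv_letter_def letter_sign_def)

lemma exp_sum_nonzero: "exp_sum w x \<noteq> 0 \<Longrightarrow> x \<in> letters w"
  by (induction w) (auto split: if_splits)

lemma exp_sum_notin: "x \<notin> letters w \<Longrightarrow> exp_sum w x = 0"
  using exp_sum_nonzero[of w x] by blast

lemma raag_step_exp_sum: "raag_step E a b \<Longrightarrow> exp_sum a = exp_sum b"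
  by (induction rule: raag_step.induct) (auto simp: letter_sign_def fun_eq_iff)

lemma raag_eq_exp_sum: "raag_eq E a b \<Longrightarrow> exp_sum a = exp_sum b"
  unfolding raag_eq_def by (erule equivclp_invariant) (rule raag_step_exp_sum)

lemma exp_sum_hom_letter: "exp_sum (hom_letter f l) x = letter_sign (snd l) * exp_sum (f (fst l)) x"
  by (auto simp: hom_letter_def letter_sign_def)

lemma exp_sum_proj: "exp_sum (proj W w) x = (if x \<in> W then exp_sum w x else 0)"
  by (induction w) auto

definition gen_pow :: "'v \<Rightarrow> int \<Rightarrow> 'v word" where
  "gen_pow v k = replicate (nat \<bar>k\<bar>) (v, k < 0)"

lemma letters_gen_pow: "letters (gen_pow v k) \<subseteq> {v}"
  by (auto simp: gen_pow_def letters_def)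

lemma exp_sum_gen_pow: "exp_sum (gen_pow v k) x = (if x = v then k else 0)"
proof -
  have "exp_sum (replicate n (v, b)) x = (if x = v then int n * letter_sign b else 0)" for n b
    by (induction n) (auto simp: algebra_simps)
  then show ?thesis by (auto simp: gen_pow_def letter_sign_def)
qed

lemma length_gen_pow: "length (gen_pow v k) = nat \<bar>k\<bar>"
  by (simp add: gen_pow_def)

lemma inv_word_gen_pow: "inv_word (gen_pow g c) = gen_pow g (- c)"
  by (auto simp: gen_pow_def inv_word_def inv_letter_def)

lemma gen_pow_eq_Cons: "c \<noteq> 0 \<Longrightarrow> gen_pow g c = (g, c < 0) # gen_pow g (c - letter_sign (c < 0))"
proof -
  assume c: "c \<noteq> 0"
  consider "c = -1" | "c < -1" | "c = 1" | "c > 1" using c by linarith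
  then show ?thesis
  proof cases
    case 1 then show ?thesis by (simp add: gen_pow_def letter_sign_def)
  next
    case 2
    then have "nat \<bar>c\<bar> = Suc (nat \<bar>c + 1\<bar>)" "c + 1 < 0" by auto
    then show ?thesis using 2 by (simp add: gen_pow_def letter_sign_def)
  next
    case 3 then show ?thesis by (simp add: gen_pow_def letter_sign_def)
  next
    case 4
    then have "nat \<bar>c\<bar> = Suc (nat \<bar>c - 1\<bar>)" "\<not> c - 1 < 0" by auto
    then show ?thesis using 4 by (simp add: gen_pow_def letter_sign_def)
  qed
qed

lemma gen_pow_hd_last: "k \<noteq> 0 \<Longrightarrow> gen_pow g k \<noteq> [] \<and> fst (hd (gen_pow g k)) = g \<and> fst (last (gen_pow g k)) = g"
  by (simp add: gen_pow_def)

lemma hom_ext_gen_pow_const: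
  assumes "f v = gen_pow g c"
  shows "hom_ext f (gen_pow v k) = gen_pow g (k * c)"
proof -
  have rep: "hom_ext f (replicate N (v, b)) = concat (replicate N (hom_letter f (v, b)))" for N b
    by (induction N) auto
  have pm: "gen_pow g (int N * d) = replicate (N * nat \<bar>d\<bar>) (g, d < 0)" for N d
  proof (cases "N = 0")
    case False
    then have "nat \<bar>int N * d\<bar> = N * nat \<bar>d\<bar>" by (simp add: abs_mult nat_mult_distrib)
    moreover have "(int N * d < 0) = (d < 0)" using False by (simp add: mult_less_0_iff)
    ultimately show ?thesis by (simp add: gen_pow_def)
  qed (simp add: gen_pow_def)
  have cr: "concat (replicate N (gen_pow g d)) = gen_pow g (int N * d)" for N d
  proof (induction N)
    case (Suc N)
    have a: "gen_pow g d = replicate (nat \<bar>d\<bar>) (g, d < 0)" by (simp add: gen_pow_def)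
    have "gen_pow g d @ gen_pow g (int N * d) = replicate (nat \<bar>d\<bar>) (g, d < 0) @ replicate (N * nat \<bar>d\<bar>) (g, d < 0)"
      by (simp only: a pm)
    also have "\<dots> = replicate (Suc N * nat \<bar>d\<bar>) (g, d < 0)"
      by (simp only: replicate_add[symmetric] mult_Suc)
    also have "\<dots> = gen_pow g (int (Suc N) * d)" by (simp only: pm)
    finally have "gen_pow g d @ gen_pow g (int N * d) = gen_pow g (int (Suc N) * d)" .
    then show ?case using Suc by simp
  qed (simp add: gen_pow_def)
  have "hom_letter f (v, k < 0) = gen_pow g (if k < 0 then - c else c)"
    using assms by (auto simp: hom_letter_def inv_word_gen_pow)
  then have "hom_ext f (gen_pow v k) = gen_pow g (int (nat \<bar>k\<bar>) * (if k < 0 then - c else c))"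
    unfolding gen_pow_def[of v k] rep cr[symmetric] by simp
  also have "int (nat \<bar>k\<bar>) * (if k < 0 then - c else c) = k * c" by auto
  finally show ?thesis .
qed

lemma exp_sum_hom_ext_gen_pow: "exp_sum (hom_ext f (gen_pow v k)) x = k * exp_sum (f v) x"
proof -
  have "exp_sum (hom_ext f (replicate N (v, b))) x = int N * letter_sign b * exp_sum (f v) x" for N b
    by (induction N) (auto simp: exp_sum_hom_letter algebra_simps)
  then show ?thesis by (auto simp: gen_pow_def letter_sign_def)
qed

section \<open>Free reduction\<close>

definition push :: "'a \<times> bool \<Rightarrow> ('a \<times> bool) list \<Rightarrow> ('a \<times> bool) list" where
  "push g r = (case r of [] \<Rightarrow> [g] | h # t \<Rightarrow> (if h = inv_letter g then t else g # r))"

definition red :: "('a \<times> bool) list \<Rightarrow> ('a \<times> bool) list" where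
  "red w = foldr push w []"

fun reduced :: "('a \<times> bool) list \<Rightarrow> bool" where
  "reduced [] = True"
| "reduced [g] = True"
| "reduced (g # h # t) = (h \<noteq> inv_letter g \<and> reduced (h # t))"

lemma reduced_tl: "reduced (g # t) \<Longrightarrow> reduced t"
  by (cases t) auto

lemma reduced_push: "reduced r \<Longrightarrow> reduced (push g r)"
  by (cases r) (auto simp: push_def dest: reduced_tl)

lemma reduced_foldr: "reduced r \<Longrightarrow> reduced (foldr push w r)"
  by (induction w) (auto intro: reduced_push)

lemma reduced_red: "reduced (red w)"
  unfolding red_def by (rule reduced_foldr) simp

lemma push_cancel: "reduced r \<Longrightarrow> push (inv_letter g) (push g r) = r"
proof (cases r)
  case Nil then show ?thesis by (simp add: push_def)
next
  case (Cons h t)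
  assume red: "reduced r"
  show ?thesis
  proof (cases "h = inv_letter g")
    case True
    have "push g r = t" using Cons True by (simp add: push_def)
    moreover have "push (inv_letter g) t = r"
    proof (cases t)
      case Nil then show ?thesis using Cons True by (simp add: push_def)
    next
      case (Cons h' t')
      then have "h' \<noteq> inv_letter h" using red \<open>r = h # t\<close> by simp
      then have "h' \<noteq> inv_letter (inv_letter g)" using True by simp
      then show ?thesis using Cons \<open>r = h # t\<close> True by (simp add: push_def)
    qed
    ultimately show ?thesis by simp
  next
    case False
    then show ?thesis using Cons by (simp add: push_def)
  qed
qed

lemma push_cancel': "reduced r \<Longrightarrow> push g (push (inv_letter g) r) = r"
  using push_cancel[of r "inv_letter g"] by simp

lemma foldr_push_push:
  assumes "reduced s" "reduced r"
  shows "foldr push (push g s) r = push g (foldr push s r)"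
proof (cases s)
  case Nil then show ?thesis by (simp add: push_def)
next
  case (Cons h t)
  show ?thesis
  proof (cases "h = inv_letter g")
    case True
    have "push g s = t" using Cons True by (simp add: push_def)
    moreover have "reduced (foldr push t r)" using assms Cons by (auto intro: reduced_foldr dest: reduced_tl)
    ultimately show ?thesis using Cons True push_cancel'[of "foldr push t r" g] by simp
  next
    case False
    then show ?thesis using Cons by (simp add: push_def)
  qed
qed

lemma foldr_push_red: "reduced r \<Longrightarrow> foldr push w r = foldr push (red w) r"
proof (induction w)
  case Nil then show ?case by (simp add: red_def)
next
  case (Cons g w)
  have "foldr push (g # w) r = push g (foldr push (red w) r)" using Cons by simp
  also have "\<dots> = foldr push (push g (red w)) r"
    by (rule foldr_push_push[symmetric]) (use Cons reduced_red in auto)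
  finally show ?case by (simp add: red_def)
qed

lemma red_append: "red (a @ b) = foldr push a (red b)"
  by (simp add: red_def)

lemma red_cong: "red a = red a' \<Longrightarrow> red (p @ a @ q) = red (p @ a' @ q)"
proof -
  assume h: "red a = red a'"
  have "red (p @ a @ q) = foldr push p (foldr push a (red q))" by (simp add: red_def)
  also have "foldr push a (red q) = foldr push (red a) (red q)" by (rule foldr_push_red[OF reduced_red])
  also have "\<dots> = foldr push (red a') (red q)" using h by simp
  also have "\<dots> = foldr push a' (red q)" by (rule foldr_push_red[OF reduced_red, symmetric])
  finally show ?thesis by (simp add: red_def)
qed

lemma red_cancel1: "red (p @ [g, inv_letter g] @ q) = red (p @ q)"
proof -
  have "red (p @ [g, inv_letter g] @ q) = foldr push p (push g (push (inv_letter g) (red q)))" by (simp add: red_def)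
  also have "push g (push (inv_letter g) (red q)) = red q" by (rule push_cancel'[OF reduced_red])
  finally show ?thesis by (simp add: red_def)
qed

lemma red_cancel: "red (p @ w @ inv_word w @ q) = red (p @ q)"
proof (induction w arbitrary: p q)
  case Nil then show ?case by simp
next
  case (Cons g w)
  have "red (p @ (g # w) @ inv_word (g # w) @ q) = red ((p @ [g]) @ w @ inv_word w @ ([inv_letter g] @ q))" by simp
  also have "\<dots> = red ((p @ [g]) @ [inv_letter g] @ q)" by (rule Cons)
  also have "\<dots> = red (p @ [g, inv_letter g] @ q)" by simp
  also have "\<dots> = red (p @ q)" by (rule red_cancel1)
  finally show ?case .
qed

lemma red_reduced: "reduced w \<Longrightarrow> red w = w"
proof (induction w)
  case Nil then show ?case by (simp add: red_def)
next
  case (Cons g w)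
  then have "red w = w" by (auto dest: reduced_tl)
  moreover have "push g w = g # w" using Cons.prems by (cases w) (auto simp: push_def)
  ultimately show ?case by (simp add: red_def)
qed

lemma red_red: "red (red w) = red w"
  by (rule red_reduced[OF reduced_red])

lemma red_cong2: "red (p @ a @ q) = red (p @ red a @ q)"
  by (rule red_cong) (rule red_red[symmetric])

lemma red_inv_cong: "red (inv_word a) = red (inv_word (red a))"
proof -
  have "red (inv_word a) = red (inv_word a @ red a @ inv_word (red a) @ [])"
    using red_cancel[of "inv_word a" "red a" "[]"] by simp
  also have "\<dots> = red (inv_word a @ a @ inv_word (red a) @ [])"
    by (rule red_cong) (rule red_red)
  also have "\<dots> = red ([] @ inv_word a @ inv_word (inv_word a) @ (inv_word (red a)))" by simp
  also have "\<dots> = red (inv_word (red a))"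
    using red_cancel[of "[]" "inv_word a" "inv_word (red a)"] by simp
  finally show ?thesis .
qed

lemma red_inv_eq: "red a = red a' \<Longrightarrow> red (inv_word a) = red (inv_word a')"
  using red_inv_cong by metis

lemma red_comm_cong:
  assumes "red a = red a'" "red b = red b'"
  shows "red (comm a b) = red (comm a' b')"
proof -
  have "red (comm a b) = red ([] @ a @ (b @ inv_word a @ inv_word b))" by (simp add: comm_def)
  also have "\<dots> = red ([] @ a' @ (b @ inv_word a @ inv_word b))" by (rule red_cong[OF assms(1)])
  also have "\<dots> = red (a' @ b @ (inv_word a @ inv_word b))" by simp
  also have "\<dots> = red (a' @ b' @ (inv_word a @ inv_word b))" by (rule red_cong[OF assms(2)])
  also have "\<dots> = red ((a' @ b') @ inv_word a @ inv_word b)" by simp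
  also have "\<dots> = red ((a' @ b') @ inv_word a' @ inv_word b)" by (rule red_cong[OF red_inv_eq[OF assms(1)]])
  also have "\<dots> = red ((a' @ b' @ inv_word a') @ inv_word b @ [])" by simp
  also have "\<dots> = red ((a' @ b' @ inv_word a') @ inv_word b' @ [])" by (rule red_cong[OF red_inv_eq[OF assms(2)]])
  finally show ?thesis by (simp add: comm_def)
qed

lemma red_hom_ext_inv:
  assumes F: "\<And>u v a b. E u v \<Longrightarrow> red (hom_letter f (u, a) @ hom_letter f (v, b)) = red (hom_letter f (v, b) @ hom_letter f (u, a))"
    and "raag_eq E w w'"
  shows "red (hom_ext f w) = red (hom_ext f w')"
  using assms(2) unfolding raag_eq_def
proof (rule equivclp_invariant[where f="\<lambda>w. red (hom_ext f w)"])
  fix x y assume "raag_step E x y"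
  then show "red (hom_ext f x) = red (hom_ext f y)"
  proof (induction rule: raag_step.induct)
    case (cancel xs v b ys)
    have "hom_letter f (v, \<not> b) = inv_word (hom_letter f (v, b))" by (auto simp: hom_letter_def)
    then show ?case using red_cancel[of "hom_ext f xs" "hom_letter f (v, b)" "hom_ext f ys"] by simp
  next
    case (commute u v xs a b ys)
    have "red (hom_ext f xs @ (hom_letter f (u, a) @ hom_letter f (v, b)) @ hom_ext f ys) =
          red (hom_ext f xs @ (hom_letter f (v, b) @ hom_letter f (u, a)) @ hom_ext f ys)"
      by (rule red_cong) (rule F[OF commute])
    then show ?case by simp
  qed
qed

lemma reduced_append:
  "reduced (a @ b) \<longleftrightarrow> reduced a \<and> reduced b \<and> (a = [] \<or> b = [] \<or> hd b \<noteq> inv_letter (last a))"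
proof (induction a rule: reduced.induct)
  case 1 then show ?case by simp
next
  case (2 g) then show ?case by (cases b) auto
next
  case (3 g h t) then show ?case by auto
qed

lemma reduced_inv_word: "reduced w \<Longrightarrow> reduced (inv_word w)"
proof (induction w rule: reduced.induct)
  case (3 g h t)
  have "reduced (inv_word (h # t))" using 3 by auto
  moreover have "inv_letter g \<noteq> inv_letter (last (inv_word (h # t)))"
    using 3(2) by (auto simp: inv_letter_def)
  ultimately show ?case by (auto simp: reduced_append)
qed (auto)

lemma reduced_Cons_iff: "reduced (g # w) \<longleftrightarrow> reduced w \<and> (w = [] \<or> hd w \<noteq> inv_letter g)"
  by (cases w) auto

lemma reduced_append_Cons:
  "reduced (a @ g # b) \<longleftrightarrow> reduced a \<and> reduced (g # b) \<and> (a = [] \<or> g \<noteq> inv_letter (last a))"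
  by (simp add: reduced_append)

lemma reduced_gen_pow: "reduced (gen_pow x k)"
proof -
  have "reduced (replicate n (x, b))" for n b
    by (induction n rule: nat_less_induct) (case_tac n; case_tac "n - 1"; auto simp: inv_letter_def)
  then show ?thesis by (simp add: gen_pow_def)
qed

lemma push_gen_pow: "push (g, b) (gen_pow g c) = gen_pow g (c + letter_sign b)"
proof (cases "c = 0")
  case True then show ?thesis by (cases b) (auto simp: push_def gen_pow_def letter_sign_def)
next
  case False
  note pc = gen_pow_eq_Cons[OF False, of g]
  show ?thesis
  proof (cases "(c < 0) = b")
    case True
    have "c + letter_sign b \<noteq> 0" "c + letter_sign b - letter_sign (c + letter_sign b < 0) = c" "(c + letter_sign b < 0) = b"
      using True False by (cases b; auto simp: letter_sign_def)+
    then have "gen_pow g (c + letter_sign b) = (g, b) # gen_pow g c"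
      using gen_pow_eq_Cons[of "c + letter_sign b" g] by simp
    moreover have "push (g, b) (gen_pow g c) = (g, b) # gen_pow g c"
      using pc True by (simp add: push_def inv_letter_def)
    ultimately show ?thesis by simp
  next
    case nb: False
    have ar: "c - letter_sign (c < 0) = c + letter_sign b" using nb by (cases b) (auto simp: letter_sign_def)
    have h: "(g, c < 0) = inv_letter (g, b)" using nb by (auto simp: inv_letter_def)
    have pc': "gen_pow g c = (g, c < 0) # gen_pow g (c + letter_sign b)" using pc unfolding ar .
    have "push (g, b) ((g, c < 0) # gen_pow g (c + letter_sign b)) = gen_pow g (c + letter_sign b)"
      by (simp only: push_def list.case h if_True refl simp_thms)
    then show ?thesis unfolding pc'[symmetric] .
  qed
qed

lemma raag_eq_push: "raag_eq E (g # r) (push g r)"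
proof (cases r)
  case (Cons h t)
  show ?thesis
  proof (cases "h = inv_letter g")
    case True
    have "raag_eq E ([] @ [g, inv_letter g] @ t) ([] @ [] @ t)"
      by (rule raag_eq_ctx[OF raag_eq_cancel2])
    then show ?thesis using Cons True by (simp add: push_def)
  next
    case False
    then show ?thesis using Cons by (simp add: push_def)
  qed
qed (simp add: push_def)

lemma foldr_push_gen_pow: "foldr push (gen_pow g a) (gen_pow g b) = gen_pow g (a + b)"
proof (induction "nat \<bar>a\<bar>" arbitrary: a)
  case 0 then show ?case by (simp add: gen_pow_def)
next
  case (Suc N)
  then have a0: "a \<noteq> 0" by auto
  have "nat \<bar>a - letter_sign (a < 0)\<bar> = N" using Suc(2) a0 by (auto simp: letter_sign_def)
  then have "foldr push (gen_pow g (a - letter_sign (a < 0))) (gen_pow g b) = gen_pow g (a - letter_sign (a < 0) + b)"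
    using Suc(1) by blast
  then show ?case using gen_pow_eq_Cons[OF a0, of g] by (simp add: push_gen_pow)
qed

lemma red_gen_pow_append: "red (gen_pow g a @ gen_pow g b) = gen_pow g (a + b)"
  using foldr_push_gen_pow red_append red_reduced[OF reduced_gen_pow] by metis

lemma red_gen_pow_swap:
  assumes "s \<noteq> t" "a \<noteq> 0" "b \<noteq> 0"
  shows "red (gen_pow s a @ gen_pow t b) \<noteq> red (gen_pow t b @ gen_pow s a)"
proof -
  have reduced: "reduced (gen_pow x c @ gen_pow y d)" if "x \<noteq> y" "c \<noteq> 0" "d \<noteq> 0" for x y c d
    using that gen_pow_hd_last[of c x] gen_pow_hd_last[of d y]
    by (simp add: reduced_append reduced_gen_pow inv_letter_def prod_eq_iff)
  have "hd (gen_pow s a @ gen_pow t b) \<noteq> hd (gen_pow t b @ gen_pow s a)"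
    using assms gen_pow_hd_last[of a s] gen_pow_hd_last[of b t] by (auto simp: hd_append)
  then show ?thesis
    using red_reduced[OF reduced[OF assms]] red_reduced[OF reduced[OF not_sym[OF assms(1)] assms(3,2)]]
    by metis
qed

lemma red_proj_anticlique:
  assumes "raag_eq E w w'" and "\<And>x y. E x y \<Longrightarrow> x \<in> W \<Longrightarrow> y \<notin> W"
  shows "red (proj W w) = red (proj W w')"
proof -
  let ?f = "\<lambda>x. if x \<in> W then [(x, False)] else []"
  have "red (hom_ext ?f w) = red (hom_ext ?f w')"
  proof (rule red_hom_ext_inv[OF _ assms(1)])
    fix u v a b assume "E u v"
    then have "hom_letter ?f (u, a) = [] \<or> hom_letter ?f (v, b) = []"
      using assms(2) by (auto simp: hom_letter_def)
    then show "red (hom_letter ?f (u, a) @ hom_letter ?f (v, b))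
        = red (hom_letter ?f (v, b) @ hom_letter ?f (u, a))" by auto
  qed
  then show ?thesis by (simp add: hom_ext_proj_single)
qed

section \<open>Normal form in a clique\<close>

definition pow_word :: "'v list \<Rightarrow> ('v \<Rightarrow> int) \<Rightarrow> 'v word" where
  "pow_word L e = concat (map (\<lambda>x. gen_pow x (e x)) L)"

definition clique :: "('v \<Rightarrow> 'v \<Rightarrow> bool) \<Rightarrow> 'v set \<Rightarrow> bool" where
  "clique E K \<longleftrightarrow> (\<forall>x\<in>K. \<forall>y\<in>K. commuting E x y)"

lemma pow_word_simps[simp]: "pow_word [] e = []" "pow_word (x # L) e = gen_pow x (e x) @ pow_word L e"
  by (auto simp: pow_word_def)

lemma letters_pow_word: "letters (pow_word L e) \<subseteq> set L"
proof (induction L)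
  case (Cons a L)
  then show ?case using letters_gen_pow[of a "e a"] by auto
qed simp

lemma exp_sum_pow_word: "distinct L \<Longrightarrow> exp_sum (pow_word L e) x = (if x \<in> set L then e x else 0)"
  by (induction L) (auto simp: exp_sum_gen_pow)

lemma pow_word_cong: "(\<And>x. x \<in> set L \<Longrightarrow> e x = e' x) \<Longrightarrow> pow_word L e = pow_word L e'"
  by (induction L) auto

lemma proj_pow_word: "proj W (pow_word L e) = pow_word (filter (\<lambda>x. x \<in> W) L) e"
proof (induction L)
  case (Cons x L)
  have "proj W (gen_pow x k) = (if x \<in> W then gen_pow x k else [])" for k
    by (simp add: gen_pow_def proj_def)
  then show ?case using Cons by simp
qed simp

lemma length_pw_le: "distinct L \<Longrightarrow> length (pow_word L (exp_sum w)) \<le> length (filter (\<lambda>l. fst l \<in> set L) w)"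
proof -
  assume d: "distinct L"
  have len: "length (pow_word L e) = sum_list (map (\<lambda>x. nat \<bar>e x\<bar>) L)" for e
    by (induction L) (auto simp: length_gen_pow)
  have "sum_list (map (\<lambda>x. nat \<bar>exp_sum w x\<bar>) L) \<le> length (filter (\<lambda>l. fst l \<in> set L) w)"
  proof (induction w)
    case Nil then show ?case by simp
  next
    case (Cons l w)
    obtain y b where l: "l = (y, b)" by (cases l)
    show ?case
    proof (cases "y \<in> set L")
      case False
      have A: "sum_list (map (\<lambda>x. nat \<bar>exp_sum (l # w) x\<bar>) L) = sum_list (map (\<lambda>x. nat \<bar>exp_sum w x\<bar>) L)"
        using False l by (auto intro!: arg_cong[where f=sum_list] map_cong)
      have B: "length (filter (\<lambda>l. fst l \<in> set L) (l # w)) = length (filter (\<lambda>l. fst l \<in> set L) w)"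
        using False l by simp
      show ?thesis using A B Cons.IH by linarith
    next
      case True
      have "sum_list (map (\<lambda>x. nat \<bar>exp_sum (l # w) x\<bar>) L) \<le> sum_list (map (\<lambda>x. nat \<bar>exp_sum w x\<bar> + (if x = y then 1 else 0)) L)"
        by (rule sum_list_mono) (auto simp: l letter_sign_def)
      also have "\<dots> = sum_list (map (\<lambda>x. nat \<bar>exp_sum w x\<bar>) L) + sum_list (map (\<lambda>x. if x = y then 1 else 0) L)"
        by (simp add: sum_list_addf)
      also have "sum_list (map (\<lambda>x. if x = y then (1::nat) else 0) L) = 1"
        using d True by (simp add: sum_list_distinct_conv_sum_set sum.delta)
      finally show ?thesis using Cons True l by simp
    qed
  qed
  then show ?thesis by (simp add: len)
qed

lemma raag_eq_Cons_gen_pow: "raag_eq E ((x, b) # gen_pow x k) (gen_pow x (k + letter_sign b))"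
  using raag_eq_push[of E "(x, b)" "gen_pow x k"] by (simp add: push_gen_pow)

lemma pow_word_ins:
  assumes "x \<in> set L" "distinct L" "clique E (set L)"
  shows "raag_eq E ((x, b) # pow_word L e) (pow_word L (e(x := e x + letter_sign b)))"
  using assms
proof (induction L)
  case Nil then show ?case by simp
next
  case (Cons y L)
  show ?case
  proof (cases "y = x")
    case True
    have c: "pow_word L (e(x := e x + letter_sign b)) = pow_word L e"
      by (rule pow_word_cong) (use Cons.prems True in auto)
    have "raag_eq E (((x, b) # gen_pow x (e x)) @ pow_word L e) (gen_pow x (e x + letter_sign b) @ pow_word L e)"
      by (rule raag_eq_append[OF raag_eq_Cons_gen_pow]) simp
    moreover have "pow_word (y # L) (e(x := e x + letter_sign b)) = gen_pow x (e x + letter_sign b) @ pow_word L (e(x := e x + letter_sign b))"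
      using True by (simp only: pow_word_simps fun_upd_same)
    ultimately show ?thesis using True by (simp only: c pow_word_simps append_Cons)
  next
    case False
    have cl: "clique E (set L)" using Cons.prems by (auto simp: clique_def)
    have "raag_eq E ((x, b) # pow_word (y # L) e) (((x, b) # gen_pow y (e y)) @ pow_word L e)" by simp
    also have "raag_eq E \<dots> ((gen_pow y (e y) @ [(x, b)]) @ pow_word L e)"
    proof (rule raag_eq_append[OF raag_eq_letter_past], rule ballI)
      fix z assume "z \<in> letters (gen_pow y (e y))"
      then have "z = y" using letters_gen_pow[of y "e y"] by blast
      then show "commuting E x z" using Cons.prems by (auto simp: clique_def)
    qed simp
    also have "raag_eq E \<dots> (gen_pow y (e y) @ ((x, b) # pow_word L e))" by simp
    also have "raag_eq E \<dots> (gen_pow y (e y) @ pow_word L (e(x := e x + letter_sign b)))"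
    proof (rule raag_eq_append[OF raag_eq_refl])
      show "raag_eq E ((x,b) # pow_word L e) (pow_word L (e(x := e x + letter_sign b)))"
        by (rule Cons.IH) (use Cons.prems False cl in auto)
    qed
    finally show ?thesis by (simp only: pow_word_simps fun_upd_other[OF False] append_Cons)
  qed
qed

lemma clique_normal_form:
  assumes "distinct L" "clique E (set L)" "letters w \<subseteq> set L"
  shows "raag_eq E w (pow_word L (exp_sum w))"
  using assms
proof (induction w)
  case Nil
  have "pow_word L (exp_sum []) = pow_word L (\<lambda>_. 0)" by (rule arg_cong[where f="pow_word L"]) (rule ext, simp)
  moreover have "pow_word L (\<lambda>_. 0) = []" by (induction L) (auto simp: gen_pow_def)
  ultimately show ?case by simp
next
  case (Cons l w)
  obtain x b where l: "l = (x, b)" by (cases l)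
  have "raag_eq E (l # w) ((x, b) # pow_word L (exp_sum w))"
    using Cons l by (auto intro: raag_eq_Cons)
  also have "raag_eq E \<dots> (pow_word L ((exp_sum w)(x := exp_sum w x + letter_sign b)))"
    by (rule pow_word_ins) (use Cons.prems l in auto)
  also have "pow_word L ((exp_sum w)(x := exp_sum w x + letter_sign b)) = pow_word L (exp_sum (l # w))"
    by (rule pow_word_cong) (auto simp: l)
  finally show ?case .
qed

lemma clique_eq:
  assumes "clique E K" "finite K" "letters a \<subseteq> K" "letters b \<subseteq> K" "exp_sum a = exp_sum b"
  shows "raag_eq E a b"
proof -
  obtain L where L: "distinct L" "set L = K" using finite_distinct_list[OF assms(2)] by blast
  have "raag_eq E a (pow_word L (exp_sum a))" by (rule clique_normal_form) (use L assms in auto)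
  moreover have "raag_eq E b (pow_word L (exp_sum b))" by (rule clique_normal_form) (use L assms in auto)
  ultimately show ?thesis using assms(5) by (metis raag_eq_sym raag_eq_trans)
qed

lemma clique_eq_Nil:
  assumes "clique E K" "finite K" "letters a \<subseteq> K" "\<And>x. exp_sum a x = 0"
  shows "raag_eq E a []"
  by (rule clique_eq[OF assms(1,2,3)]) (use assms(4) in \<open>auto simp: fun_eq_iff\<close>)

lemma clique_shorter_word:
  assumes cl: "clique E (letters g)" and x: "x \<in> letters g" "exp_sum g x = 0"
  shows "\<exists>w. raag_eq E g w \<and> length w < length g"
proof -
  obtain L where L: "distinct L" "set L = letters g - {x}"
    using finite_distinct_list[of "letters g - {x}"] by (auto simp: letters_def)
  define w where "w = pow_word L (exp_sum g)"
  have "raag_eq E g w"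
  proof (rule clique_eq[OF cl])
    show "finite (letters g)" by (simp add: letters_def)
    show "letters w \<subseteq> letters g" using letters_pow_word[of L] L unfolding w_def by blast
    show "exp_sum g = exp_sum w"
    proof
      fix y
      have "exp_sum g y = 0" if "y \<notin> set L" using that L(2) x(2) exp_sum_notin[of y g] by blast
      then show "exp_sum g y = exp_sum w y" by (simp add: w_def exp_sum_pow_word L(1))
    qed
  qed simp
  moreover have "length w < length g"
  proof -
    obtain l where "l \<in> set g" "fst l = x" using x(1) by (auto simp: letters_def)
    then have "length (filter (\<lambda>l. fst l \<in> set L) g) < length g"
      using L(2) by (intro length_filter_less) auto
    then show ?thesis using length_pw_le[OF L(1), of g] by (simp add: w_def)
  qed
  ultimately show ?thesis by blast
qed

lemma clique_subset: "clique E K \<Longrightarrow> K' \<subseteq> K \<Longrightarrow> clique E K'"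
  by (auto simp: clique_def)

lemma distinct_set_singleton: "distinct xs \<Longrightarrow> set xs = {a} \<Longrightarrow> xs = [a]"
proof (cases xs)
  case (Cons b t)
  assume d: "distinct xs" and s: "set xs = {a}"
  then have "b = a" "set t \<subseteq> {a}" "a \<notin> set t" using Cons by auto
  then have "t = []" by (cases t) auto
  then show ?thesis using Cons \<open>b = a\<close> by simp
qed simp

fun nested_comm :: "('c \<Rightarrow> 'v word) \<Rightarrow> 'v \<Rightarrow> 'c list \<Rightarrow> 'v word" where
  "nested_comm cw x [] = []"
| "nested_comm cw x [c] = cw c"
| "nested_comm cw x (c # d # cs) = comm (cw c) ((x, False) # nested_comm cw x (d # cs) @ [(x, True)])"

lemma letters_nested_comm: "letters (nested_comm cw x cs) \<subseteq> (\<Union>c\<in>set cs. letters (cw c)) \<union> {x}"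
  by (induction cw x cs rule: nested_comm.induct) (auto simp: letters_comm)

lemma nested_comm_kill:
  assumes "c \<in> set cs" "raag_eq E (hom_ext f (cw c)) []"
  shows "raag_eq E (hom_ext f (nested_comm cw x cs)) []"
  using assms
proof (induction cw x cs rule: nested_comm.induct)
  case (1 cw x) then show ?case by simp
next
  case (2 cw x c') then show ?case by simp
next
  case (3 cw x c' d cs)
  let ?B = "(x, False) # nested_comm cw x (d # cs) @ [(x, True)]"
  have hQ: "hom_ext f (nested_comm cw x (c' # d # cs)) = comm (hom_ext f (cw c')) (hom_ext f ?B)"
    by (simp add: hom_ext_comm)
  have hB: "hom_ext f ?B = f x @ hom_ext f (nested_comm cw x (d # cs)) @ inv_word (f x)" by (simp add: hom_letter_def)
  show ?case
  proof (cases "c = c'")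
    case True
    then have "raag_eq E (hom_ext f (cw c')) []" using "3.prems" by simp
    then show ?thesis unfolding hQ by (rule comm_Nil_left)
  next
    case False
    then have "c \<in> set (d # cs)" using "3.prems" by simp
    then have q: "raag_eq E (hom_ext f (nested_comm cw x (d # cs))) []" using "3.IH" "3.prems" by blast
    have "raag_eq E (f x @ hom_ext f (nested_comm cw x (d # cs)) @ inv_word (f x)) (f x @ [] @ inv_word (f x))"
      by (rule raag_eq_ctx[OF q])
    also have "f x @ [] @ inv_word (f x) = f x @ inv_word (f x)" by simp
    also have "raag_eq E \<dots> []" by (rule raag_eq_cancel_inv)
    finally have "raag_eq E (hom_ext f ?B) []" unfolding hB .
    then show ?thesis unfolding hQ by (rule comm_Nil_right)
  qed
qed

lemma reduced_nested_comm_step: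
  assumes R: "reduced R" "R \<noteq> []" "fst (hd R) = True" "last R \<noteq> (False, False)"
    and m: "(m::int) \<noteq> 0"
  shows "reduced (gen_pow True m @ (False, False) # R @ (False, True) # gen_pow True (- m)
    @ (False, False) # inv_word R @ [(False, True)])"
proof -
  have pow: "gen_pow True k \<noteq> []" "fst (hd (gen_pow True k)) = True" "fst (last (gen_pow True k)) = True"
    if "k \<noteq> 0" for k
    using gen_pow_hd_last[OF that, of True] by simp_all
  have iR: "inv_word R \<noteq> []" "reduced (inv_word R)" "hd (inv_word R) \<noteq> (False, True)"
    "fst (last (inv_word R)) = True"
    using R hd_inv_word[OF R(2)] last_inv_word[OF R(2)] reduced_inv_word[OF R(1)]
    by (auto simp: inv_word_rev inv_letter_def prod_eq_iff)
  have "reduced ((False, False) # inv_word R @ [(False, True)])"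
    using iR by (simp add: reduced_Cons_iff reduced_append inv_letter_def prod_eq_iff)
  then have "reduced ((False, True) # gen_pow True (- m) @ (False, False) # inv_word R @ [(False, True)])"
    using pow[of "- m"] m reduced_gen_pow
    by (simp add: reduced_Cons_iff reduced_append_Cons inv_letter_def prod_eq_iff)
  then have "reduced ((False, False) # R @ (False, True) # gen_pow True (- m)
      @ (False, False) # inv_word R @ [(False, True)])"
    using R by (simp add: reduced_Cons_iff reduced_append_Cons inv_letter_def prod_eq_iff)
  then show ?thesis
    using pow[of m] m reduced_gen_pow by (simp add: reduced_append_Cons inv_letter_def prod_eq_iff)
qed

lemma nested_comm_red:
  assumes "cs \<noteq> []" "\<forall>c\<in>set cs. red (hom_ext \<sigma> (cw c)) = gen_pow True (mc c) \<and> mc c \<noteq> 0"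
    and sx: "\<sigma> x = [(False, False)]"
  shows "red (hom_ext \<sigma> (nested_comm cw x cs)) \<noteq> [] \<and> fst (hd (red (hom_ext \<sigma> (nested_comm cw x cs)))) = True
         \<and> last (red (hom_ext \<sigma> (nested_comm cw x cs))) \<noteq> (False, False)"
  using assms(1,2) sx
proof (induction cw x cs rule: nested_comm.induct)
  case (1 cw x) then show ?case by simp
next
  case (2 cw x c)
  then have r: "red (hom_ext \<sigma> (nested_comm cw x [c])) = gen_pow True (mc c)" "mc c \<noteq> 0" by auto
  have hp: "gen_pow True (mc c) \<noteq> []" "fst (hd (gen_pow True (mc c))) = True" "fst (last (gen_pow True (mc c))) = True"
    using gen_pow_hd_last[OF r(2), of True] by blast+
  then have "last (gen_pow True (mc c)) \<noteq> (False, False)" by (metis fst_conv)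
  then show ?case unfolding r(1) using hp by blast
next
  case (3 cw x c d cs)
  define R where "R = red (hom_ext \<sigma> (nested_comm cw x (d # cs)))"
  have IH: "R \<noteq> [] \<and> fst (hd R) = True \<and> last R \<noteq> (False, False)" unfolding R_def
    by (rule "3.IH") (use "3.prems" in auto)
  have rc: "red (hom_ext \<sigma> (cw c)) = gen_pow True (mc c)" "mc c \<noteq> 0" using "3.prems" by auto
  let ?B = "(x, False) # nested_comm cw x (d # cs) @ [(x, True)]"
  have hB: "hom_ext \<sigma> ?B = [(False, False)] @ hom_ext \<sigma> (nested_comm cw x (d # cs)) @ [(False, True)]"
    using "3.prems"(3) by (simp add: hom_letter_def inv_letter_def)
  have eB: "red (hom_ext \<sigma> ?B) = red ([(False, False)] @ R @ [(False, True)])"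
    unfolding hB R_def by (rule red_cong2)
  have eA: "red (hom_ext \<sigma> (cw c)) = red (gen_pow True (mc c))"
    by (simp only: rc(1) red_reduced[OF reduced_gen_pow])
  have "red (hom_ext \<sigma> (nested_comm cw x (c # d # cs))) = red (comm (hom_ext \<sigma> (cw c)) (hom_ext \<sigma> ?B))"
    by (simp add: hom_ext_comm)
  also have "\<dots> = red (comm (gen_pow True (mc c)) ([(False, False)] @ R @ [(False, True)]))"
    by (rule red_comm_cong[OF eA eB])
  also have "comm (gen_pow True (mc c)) ([(False, False)] @ R @ [(False, True)]) =
     gen_pow True (mc c) @ (False, False) # R @ (False, True) # gen_pow True (- mc c) @ (False, False) # inv_word R @ [(False, True)]"
    by (simp add: comm_def inv_word_gen_pow inv_letter_def)
  also have "red \<dots> = gen_pow True (mc c) @ (False, False) # R @ (False, True) # gen_pow True (- mc c) @ (False, False) # inv_word R @ [(False, True)]"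
  proof (rule red_reduced, rule reduced_nested_comm_step)
    show "reduced R" unfolding R_def by (rule reduced_red)
  qed (use IH rc in auto)
  finally have fin: "red (hom_ext \<sigma> (nested_comm cw x (c # d # cs))) = gen_pow True (mc c) @ (False, False) # R @ (False, True) # gen_pow True (- mc c) @ (False, False) # inv_word R @ [(False, True)]" .
  have hp: "gen_pow True (mc c) \<noteq> []" "fst (hd (gen_pow True (mc c))) = True" using gen_pow_hd_last[OF rc(2), of True] by blast+
  show ?case unfolding fin using hp by simp
qed

section \<open>A linear action of \<open>A(\<Lambda>)\<close>\<close>

text \<open>Since \<open>x\<^sub>j\<close> and \<open>x\<^sub>j\<^sub>+\<^sub>1\<close> are not adjacent in \<open>P\<^sub>n\<^sup>c\<close>, adjacent
  generators act by commuting maps.  The action shows that \<open>x\<^sub>k\<^sub>+\<^sub>2\<close> does not commute with the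
  nested conjugate \<open>x\<^sub>k\<^sub>+\<^sub>1 \<cdots> x\<^sub>2 x\<^sub>1 x\<^sub>2\<^sup>-\<^sup>1 \<cdots> x\<^sub>k\<^sub>+\<^sub>1\<^sup>-\<^sup>1\<close>.\<close>

definition shear :: "(nat \<times> nat) \<times> bool \<Rightarrow> (nat \<times> nat \<Rightarrow> int) \<Rightarrow> (nat \<times> nat \<Rightarrow> int)" where
  "shear l f = (case l of ((i, j), b) \<Rightarrow> f((i, Suc j) := f (i, Suc j) + letter_sign b * f (i, j)))"

definition shear_act :: "(nat \<times> nat) word \<Rightarrow> (nat \<times> nat \<Rightarrow> int) \<Rightarrow> (nat \<times> nat \<Rightarrow> int)" where
  "shear_act w f = fold shear w f"

lemma shear_act_simps[simp]: "shear_act [] f = f" "shear_act (l # w) f = shear_act w (shear l f)"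
  "shear_act (a @ b) f = shear_act b (shear_act a f)"
  by (auto simp: shear_act_def)

lemma shear_cancel: "shear (v, \<not> b) (shear (v, b) f) = f"
  by (cases v) (auto simp: shear_def letter_sign_def fun_eq_iff)

lemma shear_comm:
  assumes "join_pc_E m n u v"
  shows "shear (v, b) (shear (u, a) f) = shear (u, a) (shear (v, b) f)"
proof -
  obtain i j where u: "u = (i, j)" by (cases u)
  obtain i' j' where v: "v = (i', j')" by (cases v)
  have "i \<noteq> i' \<or> (j \<noteq> j' \<and> j \<noteq> Suc j' \<and> j' \<noteq> Suc j)"
    using assms by (auto simp: join_pc_E_def u v)
  then show ?thesis by (auto simp: shear_def u v fun_eq_iff)
qed

lemma raag_eq_shear_act: "raag_eq (join_pc_E m n) w w' \<Longrightarrow> shear_act w = shear_act w'"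
  unfolding raag_eq_def
proof (erule equivclp_invariant)
  fix x y assume "raag_step (join_pc_E m n) x y"
  then show "shear_act x = shear_act y"
  proof (induction rule: raag_step.induct)
    case (cancel xs v b ys)
    then show ?case by (auto simp: fun_eq_iff shear_cancel)
  next
    case (commute u v xs a b ys)
    then show ?case by (auto simp: fun_eq_iff shear_comm)
  qed
qed

fun conj_tower :: "nat \<Rightarrow> nat \<Rightarrow> (nat \<times> nat) word" where
  "conj_tower i 0 = [((i, 1), False)]"
| "conj_tower i (Suc k) = [((i, k + 2), False)] @ conj_tower i k @ [((i, k + 2), True)]"

lemma letters_conj_tower: "letters (conj_tower i k) = {(i, l) | l. 1 \<le> l \<and> l \<le> k + 1}"
  by (induction k) (auto simp: le_Suc_eq)

definition unit_at_first :: "nat \<Rightarrow> nat \<times> nat \<Rightarrow> int" where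
  "unit_at_first i = (\<lambda>p. if p = (i, 1) then 1 else 0)"

lemma conj_tower_shear: "shear_act (conj_tower i k) (unit_at_first i) (i, k + 2) \<noteq> 0 \<and> (\<forall>l\<ge>k + 3. shear_act (conj_tower i k) (unit_at_first i) (i, l) = 0)"
proof (induction k)
  case 0 then show ?case by (auto simp: shear_def unit_at_first_def letter_sign_def)
next
  case (Suc k)
  have d: "shear ((i, k + 2), False) (unit_at_first i) = unit_at_first i"
    by (auto simp: shear_def unit_at_first_def fun_eq_iff)
  have "shear_act (conj_tower i (Suc k)) (unit_at_first i) = shear ((i, k + 2), True) (shear_act (conj_tower i k) (unit_at_first i))"
    using d by simp
  then show ?case using Suc by (auto simp: shear_def letter_sign_def)
qed

lemma conj_tower_not_commute:
  "\<not> raag_eq (join_pc_E m n) ([((i, k + 2), False)] @ conj_tower i k) (conj_tower i k @ [((i, k + 2), False)])"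
proof
  assume "raag_eq (join_pc_E m n) ([((i, k + 2), False)] @ conj_tower i k) (conj_tower i k @ [((i, k + 2), False)])"
  then have "shear_act ([((i, k + 2), False)] @ conj_tower i k) = shear_act (conj_tower i k @ [((i, k + 2), False)])"
    by (rule raag_eq_shear_act)
  then have eq: "shear_act ([((i, k + 2), False)] @ conj_tower i k) (unit_at_first i) (i, k + 3) = shear_act (conj_tower i k @ [((i, k + 2), False)]) (unit_at_first i) (i, k + 3)"
    by simp
  have d: "shear ((i, k + 2), False) (unit_at_first i) = unit_at_first i"
    by (auto simp: shear_def unit_at_first_def fun_eq_iff)
  have "shear_act ([((i, k + 2), False)] @ conj_tower i k) (unit_at_first i) (i, k + 3) = 0"
    using conj_tower_shear[of i k] d by simp
  moreover have "shear_act (conj_tower i k @ [((i, k + 2), False)]) (unit_at_first i) (i, k + 3) \<noteq> 0"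
    using conj_tower_shear[of i k] by (simp add: shear_def letter_sign_def)
  ultimately show False using eq by simp
qed

section \<open>Integer linear dependence\<close>

lemma sum_eliminate_row:
  fixes v :: "'i \<Rightarrow> 'x \<Rightarrow> int"
  assumes "finite I" "i0 \<notin> I"
  shows "(\<Sum>i\<in>insert i0 I. (if i = i0 then - (\<Sum>j\<in>I. c j * v j x) else c i * v i0 x) * v i y)
       = (\<Sum>i\<in>I. c i * (v i0 x * v i y - v i x * v i0 y))"
proof -
  have "(\<Sum>i\<in>I. (if i = i0 then - (\<Sum>j\<in>I. c j * v j x) else c i * v i0 x) * v i y)
      = (\<Sum>i\<in>I. c i * v i0 x * v i y)"
    using assms(2) by (intro sum.cong) auto
  moreover have "(\<Sum>i\<in>I. c i * (v i0 x * v i y - v i x * v i0 y))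
      = (\<Sum>i\<in>I. c i * v i0 x * v i y) - (\<Sum>i\<in>I. c i * v i x) * v i0 y"
    unfolding sum_distrib_right sum_subtractf[symmetric] by (rule sum.cong) (auto simp: algebra_simps)
  ultimately show ?thesis using assms by simp
qed

text \<open>The rows \<open>v i\<close> form an integer matrix with more rows than nonzero columns; eliminate
  one column at a time, pivoting with integer multiples.\<close>

lemma int_linear_dependence:
  fixes v :: "'i \<Rightarrow> 'x \<Rightarrow> int"
  assumes "finite R" "finite I" "card R < card I" "\<forall>i\<in>I. \<forall>x. x \<notin> R \<longrightarrow> v i x = 0"
  shows "\<exists>c. (\<exists>i\<in>I. c i \<noteq> 0) \<and> (\<forall>x. (\<Sum>i\<in>I. c i * v i x) = 0)"
  using assms
proof (induction R arbitrary: I v rule: finite_induct)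
  case empty
  then obtain i where "i \<in> I" by fastforce
  then show ?case using empty by (intro exI[of _ "\<lambda>_. 1"]) auto
next
  case (insert x R)
  show ?case
  proof (cases "\<forall>i\<in>I. v i x = 0")
    case True
    have "\<forall>i\<in>I. \<forall>y. y \<notin> R \<longrightarrow> v i y = 0"
    proof (intro ballI allI impI)
      fix i y assume "i \<in> I" "y \<notin> R"
      then show "v i y = 0" using True insert.prems(3) by (cases "y = x") auto
    qed
    moreover have "card R < card I" using insert by simp
    ultimately show ?thesis using insert.IH[of I v] insert.prems(1) by blast
  next
    case False
    then obtain i0 where i0: "i0 \<in> I" "v i0 x \<noteq> 0" by blast
    define I' where "I' = I - {i0}"
    have I: "I = insert i0 I'" "i0 \<notin> I'" "finite I'" using i0(1) insert.prems(1) by (auto simp: I'_def)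
    obtain c' where c': "\<exists>i\<in>I'. c' i \<noteq> 0" "\<forall>y. (\<Sum>i\<in>I'. c' i * (v i0 x * v i y - v i x * v i0 y)) = 0"
    proof -
      have "card R < card I'" using insert.prems(1,2) insert.hyps i0(1) by (simp add: I'_def)
      moreover have "\<forall>i\<in>I'. \<forall>y. y \<notin> R \<longrightarrow> v i0 x * v i y - v i x * v i0 y = 0"
      proof (intro ballI allI impI)
        fix i y assume "i \<in> I'" "y \<notin> R"
        then show "v i0 x * v i y - v i x * v i0 y = 0"
          using insert.prems(3) i0(1) I(1) by (cases "y = x") auto
      qed
      ultimately show ?thesis using insert.IH[of I' "\<lambda>i y. v i0 x * v i y - v i x * v i0 y"] I(3) that by blast
    qed
    define c where "c i = (if i = i0 then - (\<Sum>j\<in>I'. c' j * v j x) else c' i * v i0 x)" for i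
    obtain i where "i \<in> I'" "c' i \<noteq> 0" using c'(1) by blast
    then have "\<exists>i\<in>I. c i \<noteq> 0" using i0(2) I by (intro bexI[of _ i]) (auto simp: c_def)
    moreover have "\<forall>y. (\<Sum>i\<in>I. c i * v i y) = 0"
      using sum_eliminate_row[OF I(3,2), of c' v x] c'(2) unfolding c_def I(1) by simp
    ultimately show ?thesis by blast
  qed
qed

section \<open>Colouring the non-commutation graph of three cliques\<close>

text \<open>The colours: a pivot \<open>z \<in> S1 \<inter> S3\<close> together with its non-commuting partners in \<open>S2\<close>
  (\<open>Some (Inr z)\<close>); the other non-commuting pairs between \<open>S1 - S3\<close> and \<open>S2\<close> (\<open>Some (Inl True)\<close>)
  and between \<open>S3 - S1\<close> and \<open>S2\<close> (\<open>Some (Inl False)\<close>); everything else gets \<open>None\<close>.\<close>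

locale three_cliques =
  fixes EG :: "'b \<Rightarrow> 'b \<Rightarrow> bool" and S1 S2 S3 :: "'b set"
  assumes sym: "\<And>x y. EG x y \<Longrightarrow> EG y x"
    and clique1: "clique EG S1" and clique2: "clique EG S2" and clique3: "clique EG S3"
    and S1_S3_commuting: "\<And>x y. x \<in> S1 \<Longrightarrow> y \<in> S3 \<Longrightarrow> commuting EG x y"
    and no_anti_path: "\<And>s t r. s \<in> S1 \<Longrightarrow> t \<in> S2 \<Longrightarrow> r \<in> S3 \<Longrightarrow> \<not> commuting EG s t \<Longrightarrow> \<not> commuting EG t r \<Longrightarrow> s = r"
    and finite_S1: "finite S1"
begin

lemma noncommuting_sym: "\<not> commuting EG x y \<Longrightarrow> \<not> commuting EG y x"
  using sym by (auto simp: commuting_def)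

lemma S1_commuting: "x \<in> S1 \<Longrightarrow> y \<in> S1 \<Longrightarrow> commuting EG x y" using clique1 by (auto simp: clique_def)
lemma S2_commuting: "x \<in> S2 \<Longrightarrow> y \<in> S2 \<Longrightarrow> commuting EG x y" using clique2 by (auto simp: clique_def)
lemma S3_commuting: "x \<in> S3 \<Longrightarrow> y \<in> S3 \<Longrightarrow> commuting EG x y" using clique3 by (auto simp: clique_def)
lemma S3_S1_commuting: "x \<in> S3 \<Longrightarrow> y \<in> S1 \<Longrightarrow> commuting EG x y" using S1_S3_commuting noncommuting_sym by blast

definition pivots :: "'b set" where "pivots = {z. z \<in> S1 \<and> z \<in> S3 \<and> (\<exists>t\<in>S2. \<not> commuting EG z t)}"

definition pivot_of :: "'b \<Rightarrow> 'b" where "pivot_of x = (THE z. z \<in> pivots \<and> \<not> commuting EG z x)"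

definition colour :: "'b \<Rightarrow> (bool + 'b) option" where
  "colour x = (if x \<in> pivots then Some (Inr x)
     else if x \<in> S2 \<and> (\<exists>z\<in>pivots. \<not> commuting EG z x) then Some (Inr (pivot_of x))
     else if (x \<in> S1 - S3 \<and> (\<exists>t\<in>S2. \<not> commuting EG x t)) \<or> (x \<in> S2 \<and> (\<exists>p\<in>S1 - S3. \<not> commuting EG p x)) then Some (Inl True)
     else if (x \<in> S3 - S1 \<and> (\<exists>t\<in>S2. \<not> commuting EG t x)) \<or> (x \<in> S2 \<and> (\<exists>r\<in>S3 - S1. \<not> commuting EG x r)) then Some (Inl False)
     else None)"

lemma pivot_of: assumes "x \<in> S2" "z \<in> pivots" "\<not> commuting EG z x" shows "pivot_of x = z"
  unfolding pivot_of_def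
proof (rule the_equality)
  show "z \<in> pivots \<and> \<not> commuting EG z x" using assms by simp
  fix z' assume z': "z' \<in> pivots \<and> \<not> commuting EG z' x"
  show "z' = z"
  proof (rule no_anti_path)
    show "z' \<in> S1" using z' by (simp add: pivots_def)
    show "x \<in> S2" by fact
    show "z \<in> S3" using assms by (simp add: pivots_def)
    show "\<not> commuting EG z' x" using z' by simp
    show "\<not> commuting EG x z" using noncommuting_sym assms(3) by blast
  qed
qed

lemma pivots_subset: "pivots \<subseteq> S1" by (auto simp: pivots_def)

lemma finite_pivots: "finite pivots" using finite_subset[OF pivots_subset finite_S1] .

lemma pivot_unique_neighbour:
  assumes x: "x \<in> S1 \<union> S3" and y: "y \<in> S2" "\<not> commuting EG x y"
    and z: "z \<in> pivots" "\<not> commuting EG z y"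
  shows "x = z"
proof (cases "x \<in> S1")
  case True
  then show ?thesis
    using no_anti_path[of x y z] y z noncommuting_sym[OF z(2)] by (auto simp: pivots_def)
next
  case False
  then show ?thesis
    using no_anti_path[of z y x] x y z noncommuting_sym[OF y(2)] by (auto simp: pivots_def)
qed

lemma noncommuting_S2_same_colour:
  assumes x: "x \<in> S1 \<union> S3" and y: "y \<in> S2" and D: "\<not> commuting EG x y"
  shows "colour x = colour y \<and> colour x \<noteq> None"
proof -
  have "x \<notin> S2" using S2_commuting y D by blast
  have "y \<notin> S1" using x D S1_commuting S3_S1_commuting noncommuting_sym by blast
  then have "y \<notin> pivots" using pivots_subset by blast
  have no_pivot: "\<not> (\<exists>z\<in>pivots. \<not> commuting EG z y)" if "x \<notin> pivots"
    using pivot_unique_neighbour[OF x y D] that by blast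
  consider "x \<in> pivots" | "x \<in> S1 - S3" | "x \<in> S3 - S1"
    using x y D by (auto simp: pivots_def)
  then show ?thesis
  proof cases
    case 1
    then have "pivot_of y = x" using pivot_of[OF y 1 D] by blast
    then show ?thesis using 1 y D \<open>y \<notin> pivots\<close> by (auto simp: colour_def)
  next
    case 2
    then have "x \<notin> pivots" by (auto simp: pivots_def)
    then show ?thesis
      using 2 y D no_pivot \<open>x \<notin> S2\<close> \<open>y \<notin> pivots\<close> by (auto simp: colour_def)
  next
    case 3
    then have "x \<notin> pivots" by (auto simp: pivots_def)
    moreover have "\<not> (\<exists>p\<in>S1 - S3. \<not> commuting EG p y)"
      using no_anti_path[of _ y x] 3 y noncommuting_sym[OF D] by blast
    ultimately show ?thesis
      using 3 y D no_pivot noncommuting_sym[OF D] \<open>x \<notin> S2\<close> \<open>y \<notin> S1\<close> \<open>y \<notin> pivots\<close>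
      by (auto simp: colour_def)
  qed
qed

abbreviation "U \<equiv> S1 \<union> S2 \<union> S3"

lemma noncommuting_same_colour:
  assumes "x \<in> U" "y \<in> U" "\<not> commuting EG x y"
  shows "colour x = colour y \<and> colour x \<noteq> None"
proof (cases "x \<in> S2")
  case True
  then have "y \<notin> S2" using assms S2_commuting by blast
  then have "y \<in> S1 \<union> S3" using assms by blast
  moreover have "\<not> commuting EG y x" using assms(3) noncommuting_sym by blast
  ultimately have "colour y = colour x \<and> colour y \<noteq> None" using noncommuting_S2_same_colour[of y x] True by blast
  then show ?thesis by metis
next
  case False
  then have xx: "x \<in> S1 \<union> S3" using assms by blast
  show ?thesis
  proof (cases "y \<in> S2")
    case True then show ?thesis using noncommuting_S2_same_colour[of x y] xx assms(3) by blast
  next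
    case False
    then have "y \<in> S1 \<union> S3" using assms by blast
    then have "commuting EG x y" using xx S1_commuting S3_commuting S1_S3_commuting S3_S1_commuting by blast
    then show ?thesis using assms by blast
  qed
qed

lemma colour_commuting: "x \<in> U \<Longrightarrow> y \<in> U \<Longrightarrow> colour x \<noteq> colour y \<Longrightarrow> commuting EG x y"
  using noncommuting_same_colour by blast

lemma colour_None_commuting: "x \<in> U \<Longrightarrow> y \<in> U \<Longrightarrow> colour x = None \<Longrightarrow> commuting EG x y"
  using noncommuting_same_colour by blast

lemma colour_True_not_S3: "colour x = Some (Inl True) \<Longrightarrow> x \<notin> S3"
proof
  assume c: "colour x = Some (Inl True)" and x3: "x \<in> S3"
  then have "x \<notin> pivots" by (auto simp: colour_def split: if_splits)
  then have "(x \<in> S1 - S3 \<and> (\<exists>t\<in>S2. \<not> commuting EG x t)) \<or> (x \<in> S2 \<and> (\<exists>p\<in>S1 - S3. \<not> commuting EG p x))"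
    using c by (auto simp: colour_def split: if_splits)
  then obtain p where "p \<in> S1" "\<not> commuting EG p x" using x3 by blast
  then show False using S1_S3_commuting x3 by blast
qed

lemma colour_False_not_S1: "colour x = Some (Inl False) \<Longrightarrow> x \<notin> S1"
proof
  assume c: "colour x = Some (Inl False)" and x1: "x \<in> S1"
  then have "x \<notin> pivots" by (auto simp: colour_def split: if_splits)
  then have "(x \<in> S3 - S1 \<and> (\<exists>t\<in>S2. \<not> commuting EG t x)) \<or> (x \<in> S2 \<and> (\<exists>r\<in>S3 - S1. \<not> commuting EG x r))"
    using c by (auto simp: colour_def split: if_splits)
  then obtain r where "r \<in> S3" "\<not> commuting EG x r" using x1 by blast
  then show False using S1_S3_commuting x1 by blast
qed

lemma colour_pivot_eq: "colour x = Some (Inr z) \<Longrightarrow> x \<in> S1 \<union> S3 \<Longrightarrow> x = z"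
proof -
  assume c: "colour x = Some (Inr z)" and x: "x \<in> S1 \<union> S3"
  show "x = z"
  proof (cases "x \<in> pivots")
    case True then show ?thesis using c by (simp add: colour_def)
  next
    case False
    then have "x \<in> S2 \<and> (\<exists>z\<in>pivots. \<not> commuting EG z x)" using c by (auto simp: colour_def split: if_splits)
    then obtain z' where "z' \<in> pivots" "\<not> commuting EG z' x" by blast
    then have "z' \<in> S1" "z' \<in> S3" by (auto simp: pivots_def)
    then have "commuting EG z' x" using x \<open>\<not> commuting EG z' x\<close> S1_commuting S1_S3_commuting by blast
    then show ?thesis using \<open>\<not> commuting EG z' x\<close> by blast
  qed
qed

lemma pivot_of_in: "x \<in> S2 \<and> (\<exists>z\<in>pivots. \<not> commuting EG z x) \<Longrightarrow> pivot_of x \<in> pivots"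
  using pivot_of by blast

lemma colour_range: "colour x = None \<or> colour x = Some (Inl True) \<or> colour x = Some (Inl False) \<or> (\<exists>z\<in>pivots. colour x = Some (Inr z))"
  unfolding colour_def using pivot_of_in[of x] by auto

end

section \<open>Supports of the images of the generators\<close>

locale kk_hom =
  fixes m :: nat and n :: "nat \<Rightarrow> nat" and VG :: "'b set" and EG :: "'b \<Rightarrow> 'b \<Rightarrow> bool"
    and \<psi> :: "nat \<times> nat \<Rightarrow> 'b word"
  assumes fsg: "finite_simple_graph VG EG"
    and hom: "raag_hom (join_pc_V m n) (join_pc_E m n) VG EG \<psi>"
    and inj: "raag_hom_injective (join_pc_V m n) (join_pc_E m n) EG \<psi>"
    and KK: "KK_condition (join_pc_V m n) EG \<psi>"
begin

abbreviation "VL \<equiv> join_pc_V m n"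
abbreviation "EL \<equiv> join_pc_E m n"

definition expo :: "nat \<times> nat \<Rightarrow> 'b \<Rightarrow> int" where "expo v = exp_sum (\<psi> v)"
definition supp :: "nat \<times> nat \<Rightarrow> 'b set" where "supp v = {x. expo v x \<noteq> 0}"
definition supp_list :: "nat \<times> nat \<Rightarrow> 'b list" where "supp_list v = (SOME L. distinct L \<and> set L = supp v)"
definition nf :: "nat \<times> nat \<Rightarrow> 'b word" where "nf v = pow_word (supp_list v) (expo v)"

lemma EG_sym: "EG x y \<Longrightarrow> EG y x" using fsg by (auto simp: finite_simple_graph_def)
lemma EG_irrefl: "\<not> EG x x" using fsg by (auto simp: finite_simple_graph_def)
lemma finite_VG: "finite VG" using fsg by (auto simp: finite_simple_graph_def)
lemma commuting_sym: "commuting EG x y \<Longrightarrow> commuting EG y x" by (auto simp: commuting_def EG_sym)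

lemma letters_psi: "v \<in> VL \<Longrightarrow> letters (\<psi> v) \<subseteq> VG"
  using hom by (auto simp: raag_hom_def word_over_def letters_def)

lemma psi_comm: "v \<in> VL \<Longrightarrow> u \<in> VL \<Longrightarrow> EL u v \<Longrightarrow> raag_eq EG (\<psi> u @ \<psi> v) (\<psi> v @ \<psi> u)"
  using hom by (auto simp: raag_hom_def)

lemma psi_injective: "letters w1 \<subseteq> VL \<Longrightarrow> letters w2 \<subseteq> VL \<Longrightarrow> raag_eq EG (hom_ext \<psi> w1) (hom_ext \<psi> w2) \<Longrightarrow> raag_eq EL w1 w2"
  using inj by (auto simp: raag_hom_injective_def word_over_def letters_def)

lemma supp_letters: "supp v \<subseteq> letters (\<psi> v)"
  by (auto simp: supp_def expo_def intro: exp_sum_nonzero)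

lemma finite_supp: "finite (supp v)"
  by (rule finite_subset[OF supp_letters]) (simp add: letters_def)

lemma supp_subset_VG: "v \<in> VL \<Longrightarrow> supp v \<subseteq> VG" using supp_letters letters_psi by blast

lemma supp_list: "distinct (supp_list v) \<and> set (supp_list v) = supp v"
proof -
  obtain L where "distinct L \<and> set L = supp v" using finite_distinct_list[OF finite_supp] by blast
  then show ?thesis unfolding supp_list_def by (rule someI)
qed

lemma exp_sum_nf: "exp_sum (nf v) = expo v"
  by (rule ext) (auto simp: nf_def exp_sum_pow_word supp_list supp_def)

lemma letters_nf: "letters (nf v) \<subseteq> supp v" using letters_pow_word supp_list unfolding nf_def by metis

lemma letters_hom_ext_nf: "letters (hom_ext nf u) \<subseteq> (\<Union>v\<in>letters u. supp v)"
  using letters_hom_ext[of nf u] letters_nf by blast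

lemma geodesic_exists: "\<exists>g. geodesic_rep EG w g"
proof -
  define k where "k = (LEAST k. \<exists>w'. raag_eq EG w w' \<and> length w' = k)"
  have "\<exists>w'. raag_eq EG w w' \<and> length w' = k"
    unfolding k_def by (rule LeastI[where k="length w"]) auto
  then obtain g where g: "raag_eq EG w g" "length g = k" by blast
  have "length g \<le> length w''" if "raag_eq EG w w''" for w''
    unfolding g(2) k_def by (rule Least_le) (use that in auto)
  then show ?thesis using g by (auto simp: geodesic_rep_def)
qed

lemma raag_supp_clique: "v \<in> VL \<Longrightarrow> clique EG (raag_supp EG (\<psi> v))"
  using KK by (auto simp: KK_condition_def clique_def commuting_def)

lemma geodesic_letters:
  assumes v: "v \<in> VL" and g: "geodesic_rep EG (\<psi> v) g" and x: "x \<in> letters g"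
  shows "expo v x \<noteq> 0"
proof
  assume "expo v x = 0"
  have eq: "raag_eq EG (\<psi> v) g" using g by (simp add: geodesic_rep_def)
  have "letters g \<subseteq> raag_supp EG (\<psi> v)" using g by (auto simp: raag_supp_def letters_def)
  then have cl: "clique EG (letters g)" using raag_supp_clique[OF v] clique_subset by blast
  have "exp_sum g x = 0" using raag_eq_exp_sum[OF eq] \<open>expo v x = 0\<close> by (simp add: expo_def)
  then obtain w where w: "raag_eq EG g w" "length w < length g"
    using clique_shorter_word[OF cl x] by blast
  have "length g \<le> length w" using g raag_eq_trans[OF eq w(1)] by (simp add: geodesic_rep_def)
  then show False using w(2) by simp
qed

lemma raag_supp_psi: "v \<in> VL \<Longrightarrow> raag_supp EG (\<psi> v) = supp v"
proof
  assume v: "v \<in> VL"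
  show "raag_supp EG (\<psi> v) \<subseteq> supp v"
  proof
    fix x assume "x \<in> raag_supp EG (\<psi> v)"
    then obtain g where "geodesic_rep EG (\<psi> v) g" "x \<in> letters g" by (auto simp: raag_supp_def letters_def)
    then show "x \<in> supp v" using geodesic_letters[OF v] by (simp add: supp_def)
  qed
  show "supp v \<subseteq> raag_supp EG (\<psi> v)"
  proof
    fix x assume x: "x \<in> supp v"
    obtain g where g: "geodesic_rep EG (\<psi> v) g" using geodesic_exists by blast
    then have "exp_sum g = expo v" unfolding geodesic_rep_def expo_def by (metis raag_eq_exp_sum)
    then have "x \<in> letters g" using x by (auto simp: supp_def intro: exp_sum_nonzero)
    then show "x \<in> raag_supp EG (\<psi> v)" using g by (auto simp: raag_supp_def letters_def)
  qed
qed

lemma supp_clique: "v \<in> VL \<Longrightarrow> clique EG (supp v)"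
  using raag_supp_clique raag_supp_psi by metis

lemma raag_eq_psi_nf: "v \<in> VL \<Longrightarrow> raag_eq EG (\<psi> v) (nf v)"
proof -
  assume v: "v \<in> VL"
  obtain g where g: "geodesic_rep EG (\<psi> v) g" using geodesic_exists by blast
  have "letters g \<subseteq> raag_supp EG (\<psi> v)" using g by (auto simp: raag_supp_def letters_def)
  then have lg: "letters g \<subseteq> supp v" using raag_supp_psi[OF v] by simp
  have g1: "raag_eq EG (\<psi> v) g" using g by (simp add: geodesic_rep_def)
  have "raag_eq EG g (nf v)"
  proof (rule clique_eq[OF supp_clique[OF v] finite_supp])
    show "letters g \<subseteq> supp v" by (rule lg)
    show "letters (nf v) \<subseteq> supp v" by (rule letters_nf)
    have "exp_sum (\<psi> v) = exp_sum g" by (rule raag_eq_exp_sum[OF g1])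
    then show "exp_sum g = exp_sum (nf v)" by (simp add: exp_sum_nf expo_def)
  qed
  then show ?thesis using g1 by (rule raag_eq_trans[rotated])
qed

lemma hom_ext_nf: "letters w \<subseteq> VL \<Longrightarrow> raag_eq EG (hom_ext \<psi> w) (hom_ext nf w)"
  apply (rule raag_eq_hom_ext) using raag_eq_psi_nf by blast

lemma nf_injective: "letters w1 \<subseteq> VL \<Longrightarrow> letters w2 \<subseteq> VL \<Longrightarrow> raag_eq EG (hom_ext nf w1) (hom_ext nf w2) \<Longrightarrow> raag_eq EL w1 w2"
proof -
  assume a: "letters w1 \<subseteq> VL" "letters w2 \<subseteq> VL" "raag_eq EG (hom_ext nf w1) (hom_ext nf w2)"
  have "raag_eq EG (hom_ext \<psi> w1) (hom_ext nf w1)" by (rule hom_ext_nf[OF a(1)])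
  also have "raag_eq EG \<dots> (hom_ext nf w2)" by (rule a(3))
  also have "raag_eq EG \<dots> (hom_ext \<psi> w2)" by (rule raag_eq_sym[OF hom_ext_nf[OF a(2)]])
  finally show ?thesis by (rule psi_injective[OF a(1,2)])
qed

lemma proj_nf_singleton:
  assumes "W \<inter> supp u = {s}"
  shows "proj W (nf u) = gen_pow s (expo u s)"
proof -
  have "filter (\<lambda>x. x \<in> W) (supp_list u) = [s]"
    using supp_list[of u] assms by (intro distinct_set_singleton) auto
  then show ?thesis by (simp add: nf_def proj_pow_word)
qed

text \<open>Otherwise the projection to the anticlique \<open>{s, t}\<close> would turn the commuting images
  of \<open>u\<close> and \<open>v\<close> into commuting powers of two distinct free generators.\<close>

lemma adjacent_supp_commuting:
  assumes u: "u \<in> VL" and v: "v \<in> VL" and uv: "EL u v" and s: "s \<in> supp u" and t: "t \<in> supp v"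
  shows "commuting EG s t"
proof (rule ccontr)
  assume nc: "\<not> commuting EG s t"
  then have st: "s \<noteq> t" "\<not> EG s t" "\<not> EG t s" using EG_sym[of t s] by (auto simp: commuting_def)
  have "t \<notin> supp u" using supp_clique[OF u] s nc unfolding clique_def by blast
  then have pu: "proj {s, t} (nf u) = gen_pow s (expo u s)" using s by (intro proj_nf_singleton) auto
  have "s \<notin> supp v" using supp_clique[OF v] t nc commuting_sym unfolding clique_def by blast
  then have pv: "proj {s, t} (nf v) = gen_pow t (expo v t)" using t by (intro proj_nf_singleton) auto
  have "raag_eq EG (nf u @ nf v) (nf v @ nf u)"
    using psi_comm[OF v u uv] raag_eq_psi_nf[OF u] raag_eq_psi_nf[OF v] by (meson raag_eq_append raag_eq_sym raag_eq_trans)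
  then have "red (proj {s, t} (nf u @ nf v)) = red (proj {s, t} (nf v @ nf u))"
    by (rule red_proj_anticlique) (use st EG_irrefl in auto)
  moreover have "expo u s \<noteq> 0" "expo v t \<noteq> 0" using s t by (auto simp: supp_def)
  ultimately show False using red_gen_pow_swap[OF st(1)] by (simp add: pu pv)
qed

primrec reach :: "nat \<Rightarrow> nat \<Rightarrow> 'b set" where
  "reach i 0 = supp (i, 1)"
| "reach i (Suc k) = {t \<in> supp (i, k + 2). \<exists>s\<in>reach i k. \<not> commuting EG s t}"

lemma reach_sub: "reach i k \<subseteq> supp (i, k + 1)"
  by (cases k) auto

lemma EL_same_factor_far: "i < m \<Longrightarrow> 1 \<le> j \<Longrightarrow> j \<le> n i \<Longrightarrow> 1 \<le> j' \<Longrightarrow> j' \<le> n i \<Longrightarrow> j + 2 \<le> j' \<Longrightarrow> EL (i, j) (i, j')"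
  by (auto simp: join_pc_E_def join_pc_V_def)

lemma supp_far_commuting:
  assumes "i < m" "a \<in> supp (i, j)" "b \<in> supp (i, l)" "1 \<le> j" "l \<le> n i" "j + 2 \<le> l"
  shows "commuting EG a b"
  by (rule adjacent_supp_commuting[OF _ _ EL_same_factor_far]) (use assms in \<open>auto simp: join_pc_V_def\<close>)

text \<open>At level \<open>k\<close> this is the definition of \<open>reach\<close>; lower levels are far from \<open>k + 2\<close>
  in the path, hence adjacent to it in \<open>\<Lambda>\<close>.\<close>

lemma commuting_outside_reach:
  assumes i: "i < m" and k: "k + 2 \<le> n i"
    and x: "x \<in> supp (i, k + 2)" "x \<notin> reach i (Suc k)" and y: "y \<in> (\<Union>l\<le>k. reach i l)"
  shows "commuting EG x y"
proof -
  obtain l where l: "l \<le> k" "y \<in> reach i l" using y by blast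
  show ?thesis
  proof (cases "l = k")
    case True
    then have "commuting EG y x" using x l by auto
    then show ?thesis by (rule commuting_sym)
  next
    case False
    have "y \<in> supp (i, l + 1)" using reach_sub l by blast
    moreover have "EL (i, l + 1) (i, k + 2)"
      by (rule EL_same_factor_far) (use i k l False in auto)
    ultimately have "commuting EG y x"
      using adjacent_supp_commuting[of "(i, l + 1)" "(i, k + 2)" y x] x by (auto simp: join_pc_E_def)
    then show ?thesis by (rule commuting_sym)
  qed
qed

lemma conj_tower_image_reach:
  assumes i: "i < m" and k: "k + 2 \<le> n i"
  shows "\<exists>W. raag_eq EG (hom_ext nf (conj_tower i k)) W \<and> letters W \<subseteq> (\<Union>l\<le>k. reach i l)"
  using k
proof (induction k)
  case 0
  have "letters (nf (i, 1)) \<subseteq> reach i 0" using letters_nf by simp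
  then show ?case by (intro exI[of _ "nf (i, 1)"]) (auto simp: hom_letter_def)
next
  case (Suc k)
  then obtain W where W: "raag_eq EG (hom_ext nf (conj_tower i k)) W" "letters W \<subseteq> (\<Union>l\<le>k. reach i l)"
    by auto
  define X where "X = nf (i, k + 2)"
  define a where "a = proj (reach i (Suc k)) X"
  define b where "b = proj (- reach i (Suc k)) X"
  have vX: "(i, k + 2) \<in> VL" using Suc.prems i by (auto simp: join_pc_V_def)
  have X: "raag_eq EG X (a @ b)"
    unfolding a_def b_def
  proof (rule raag_eq_split)
    show "\<forall>x\<in>letters X \<inter> reach i (Suc k). \<forall>y\<in>letters X - reach i (Suc k). commuting EG x y"
      using supp_clique[OF vX] letters_nf[of "(i, k + 2)"] by (auto simp: X_def clique_def)
  qed (rule EG_sym)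
  have "commuting EG x y" if "x \<in> letters b" "y \<in> letters W" for x y
  proof (rule commuting_outside_reach[OF i])
    show "k + 2 \<le> n i" using Suc.prems by simp
    show "x \<in> supp (i, k + 2)" "x \<notin> reach i (Suc k)"
      using that(1) letters_nf[of "(i, k + 2)"] by (auto simp: b_def X_def letters_proj)
    show "y \<in> (\<Union>l\<le>k. reach i l)" using that(2) W(2) by blast
  qed
  then have "\<forall>x\<in>letters b. \<forall>y\<in>letters W. commuting EG x y" by blast
  have "hom_ext nf (conj_tower i (Suc k)) = X @ hom_ext nf (conj_tower i k) @ inv_word X"
    by (simp add: X_def hom_letter_def)
  also have "raag_eq EG \<dots> ((a @ b) @ W @ inv_word (a @ b))"
    by (intro raag_eq_append raag_eq_inv X W(1))
  also have "raag_eq EG \<dots> (a @ W @ inv_word a)"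
    by (rule raag_eq_conj_split) fact
  finally have "raag_eq EG (hom_ext nf (conj_tower i (Suc k))) (a @ W @ inv_word a)" .
  moreover have "letters (a @ W @ inv_word a) \<subseteq> (\<Union>l\<le>Suc k. reach i l)"
  proof -
    have "letters (a @ W @ inv_word a) = letters a \<union> letters W" by auto
    also have "\<dots> \<subseteq> (\<Union>l\<le>Suc k. reach i l)"
    proof (rule Un_least)
      have "letters a \<subseteq> reach i (Suc k)" unfolding a_def letters_proj by (rule Int_lower2)
      then show "letters a \<subseteq> (\<Union>l\<le>Suc k. reach i l)" by (blast intro: SUP_upper2)
      have "(\<Union>l\<le>k. reach i l) \<subseteq> (\<Union>l\<le>Suc k. reach i l)" by (rule UN_mono) auto
      with W(2) show "letters W \<subseteq> (\<Union>l\<le>Suc k. reach i l)" by (rule order_trans)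
    qed
    finally show ?thesis .
  qed
  ultimately show ?case by blast
qed

lemma reach_nonempty:
  assumes i: "i < m" and k: "k + 2 \<le> n i"
  shows "reach i (Suc k) \<noteq> {}"
proof
  assume empty: "reach i (Suc k) = {}"
  obtain W where W: "raag_eq EG (hom_ext nf (conj_tower i k)) W" "letters W \<subseteq> (\<Union>l\<le>k. reach i l)"
    using conj_tower_image_reach[OF i k] by auto
  define X where "X = nf (i, k + 2)"
  define x where "x = [((i, k + 2), False)]"
  have "commuting EG a b" if "a \<in> letters X" "b \<in> letters W" for a b
  proof (rule commuting_outside_reach[OF i k])
    show "a \<in> supp (i, k + 2)" using that(1) letters_nf unfolding X_def by blast
    show "a \<notin> reach i (Suc k)" using empty by simp
    show "b \<in> (\<Union>l\<le>k. reach i l)" using that(2) W(2) by blast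
  qed
  then have "\<forall>a\<in>letters X. \<forall>b\<in>letters W. commuting EG a b" by blast
  have "hom_ext nf (x @ conj_tower i k) = X @ hom_ext nf (conj_tower i k)"
    by (simp add: x_def X_def hom_letter_def)
  also have "raag_eq EG \<dots> (X @ W)" by (intro raag_eq_append raag_eq_refl W(1))
  also have "raag_eq EG \<dots> (W @ X)" by (rule raag_eq_commute_words) fact
  also have "raag_eq EG \<dots> (hom_ext nf (conj_tower i k) @ X)"
    by (intro raag_eq_append raag_eq_refl raag_eq_sym[OF W(1)])
  also have "hom_ext nf (conj_tower i k) @ X = hom_ext nf (conj_tower i k @ x)"
    by (simp add: x_def X_def hom_letter_def)
  finally have "raag_eq EG (hom_ext nf (x @ conj_tower i k)) (hom_ext nf (conj_tower i k @ x))" .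
  moreover have "letters (x @ conj_tower i k) \<subseteq> VL" "letters (conj_tower i k @ x) \<subseteq> VL"
    using i k by (auto simp: x_def letters_conj_tower join_pc_V_def)
  ultimately have "raag_eq EL (x @ conj_tower i k) (conj_tower i k @ x)" using nf_injective by blast
  then show False using conj_tower_not_commute by (simp add: x_def)
qed

end

section \<open>Factors of length three\<close>

text \<open>Suppose the supports of a factor of length 3 admit no anti-path.  Colouring the
  non-commutation graph on the three supports, one builds a nested commutator of colour words
  which \<open>\<psi>\<close> kills although it is nontrivial in \<open>A(\<Lambda>)\<close>.\<close>

locale kk_hom_without_anti_path_3 = kk_hom +
  fixes i :: nat
  assumes i_factor: "i < m" and n_i: "n i = 3"
    and no_anti_path: "\<And>s t r. s \<in> supp (i, 1) \<Longrightarrow> t \<in> supp (i, 2) \<Longrightarrow> r \<in> supp (i, 3)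
      \<Longrightarrow> \<not> commuting EG s t \<Longrightarrow> \<not> commuting EG t r \<Longrightarrow> s = r"
begin

abbreviation "v1 \<equiv> (i, 1::nat)"
abbreviation "v2 \<equiv> (i, 2::nat)"
abbreviation "v3 \<equiv> (i, 3::nat)"

lemma factor_in_VL: "v1 \<in> VL" "v2 \<in> VL" "v3 \<in> VL"
  using i_factor n_i by (auto simp: join_pc_V_def)

lemma EL_factor: "EL v1 v3" "\<not> EL v1 v2" "\<not> EL v2 v1" "\<not> EL v2 v3" "\<not> EL v3 v2"
  using factor_in_VL by (auto simp: join_pc_E_def)

sublocale T: three_cliques EG "supp v1" "supp v2" "supp v3"
proof
  show "\<And>x y. EG x y \<Longrightarrow> EG y x" by (rule EG_sym)
  show "clique EG (supp v1)" "clique EG (supp v2)" "clique EG (supp v3)"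
    using supp_clique factor_in_VL by blast+
  show "\<And>x y. x \<in> supp v1 \<Longrightarrow> y \<in> supp v3 \<Longrightarrow> commuting EG x y"
    using adjacent_supp_commuting[OF factor_in_VL(1,3) EL_factor(1)] by blast
  show "finite (supp v1)" by (rule finite_supp)
qed (rule no_anti_path)

definition pivot_list where
  "pivot_list = (SOME zs. distinct zs \<and> set zs = T.pivots)"

lemma pivot_list: "distinct pivot_list" "set pivot_list = T.pivots"
proof -
  have "\<exists>zs. distinct zs \<and> set zs = T.pivots"
    using finite_distinct_list[OF T.finite_pivots] by blast
  then have "distinct pivot_list \<and> set pivot_list = T.pivots"
    unfolding pivot_list_def by (rule someI_ex)
  then show "distinct pivot_list" "set pivot_list = T.pivots" by auto
qed

definition colours where
  "colours = Some (Inl True) # Some (Inl False) # map (\<lambda>z. Some (Inr z)) pivot_list"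

lemma colour_in_colours: "T.colour x \<in> set (None # colours)"
  using T.colour_range[of x] pivot_list by (auto simp: colours_def)

lemma distinct_colours: "distinct (None # colours)"
  using pivot_list by (auto simp: colours_def distinct_map inj_on_def)

definition colour_word where
  "colour_word c = (case c of Some (Inl b) \<Rightarrow> if b then gen_pow v3 1 else gen_pow v1 1
     | Some (Inr z) \<Rightarrow> gen_pow v1 (expo v3 z) @ gen_pow v3 (- expo v1 z) | None \<Rightarrow> [])"

definition witness :: "(nat \<times> nat) word" where
  "witness = nested_comm colour_word v2 colours"

lemma letters_colour_word: "letters (colour_word c) \<subseteq> {v1, v3}"
  using letters_gen_pow[of v1] letters_gen_pow[of v3]
  by (auto simp: colour_word_def split: option.splits sum.splits)

lemma letters_witness: "letters witness \<subseteq> {v1, v2, v3}"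
  using letters_nested_comm[of colour_word v2 colours] letters_colour_word
  unfolding witness_def by blast

lemma letters_image_factor:
  "letters u \<subseteq> {v1, v2, v3} \<Longrightarrow> letters (hom_ext nf u) \<subseteq> supp v1 \<union> supp v2 \<union> supp v3"
  using letters_hom_ext_nf[of u] by blast

lemma exp_sum_colour_word_image:
  assumes c: "c \<in> set colours" and x: "T.colour x = c"
  shows "exp_sum (hom_ext nf (colour_word c)) x = 0"
proof -
  have exp_gen_pow: "exp_sum (hom_ext nf (gen_pow v k)) y = k * expo v y" for v k y
    by (simp add: exp_sum_hom_ext_gen_pow exp_sum_nf)
  from c consider "c = Some (Inl True)" | "c = Some (Inl False)"
    | z where "z \<in> T.pivots" "c = Some (Inr z)"
    using pivot_list by (auto simp: colours_def)
  then show ?thesis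
  proof cases
    case 1
    then have "expo v3 x = 0" using T.colour_True_not_S3 x by (simp add: supp_def)
    then show ?thesis using 1 by (simp add: colour_word_def exp_gen_pow)
  next
    case 2
    then have "expo v1 x = 0" using T.colour_False_not_S1 x by (simp add: supp_def)
    then show ?thesis using 2 by (simp add: colour_word_def exp_gen_pow)
  next
    case (3 z)
    have "x = z \<or> expo v1 x = 0 \<and> expo v3 x = 0"
      using T.colour_pivot_eq[of x z] x 3 by (auto simp: supp_def)
    then show ?thesis using 3 by (auto simp: colour_word_def exp_gen_pow)
  qed
qed

lemma colour_word_image_trivial:
  assumes c: "c \<in> set colours"
  shows "raag_eq EG (proj {x. T.colour x = c} (hom_ext nf (colour_word c))) []"
proof (rule clique_eq_Nil[of EG "supp v1 \<union> supp v3"])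
  show "clique EG (supp v1 \<union> supp v3)"
    using T.S1_commuting T.S3_commuting T.S1_S3_commuting T.S3_S1_commuting
    by (auto simp: clique_def)
  show "finite (supp v1 \<union> supp v3)" using finite_supp by simp
  show "letters (proj {x. T.colour x = c} (hom_ext nf (colour_word c))) \<subseteq> supp v1 \<union> supp v3"
    using letters_hom_ext_nf[of "colour_word c"] letters_colour_word[of c]
    by (auto simp: letters_proj)
  show "exp_sum (proj {x. T.colour x = c} (hom_ext nf (colour_word c))) x = 0" for x
    using exp_sum_colour_word_image[OF c] by (simp add: exp_sum_proj)
qed

lemma colour_class_of_witness_trivial:
  assumes "c \<in> set (None # colours)"
  shows "raag_eq EG (proj {x. T.colour x = c} (hom_ext nf witness)) []"
proof (cases "c = None")
  case True
  define B where "B = (v2, False) # nested_comm colour_word v2 (tl colours) @ [(v2, True)]"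
  have witness: "witness = comm (colour_word (Some (Inl True))) B"
    by (simp add: witness_def colours_def B_def)
  have "letters B \<subseteq> {v1, v2, v3}"
    using letters_nested_comm[of colour_word v2 "tl colours"] letters_colour_word
    by (auto simp: B_def)
  then have "raag_eq EG (comm (proj {x. T.colour x = None} (hom_ext nf (colour_word (Some (Inl True)))))
      (proj {x. T.colour x = None} (hom_ext nf B))) []"
    using letters_image_factor letters_colour_word T.colour_None_commuting
    by (intro comm_commuting) (auto simp: letters_proj, blast)
  then show ?thesis using True by (simp add: witness hom_ext_comm comm_def)
next
  case False
  then have c: "c \<in> set colours" using assms by auto
  have "raag_eq EG (hom_ext (\<lambda>v. proj {x. T.colour x = c} (nf v)) (colour_word c)) []"
    using colour_word_image_trivial[OF c] by (simp add: proj_hom_ext)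
  then have "raag_eq EG (hom_ext (\<lambda>v. proj {x. T.colour x = c} (nf v)) witness) []"
    unfolding witness_def by (rule nested_comm_kill[OF c])
  then show ?thesis by (simp add: proj_hom_ext)
qed

lemma witness_image_trivial: "raag_eq EG (hom_ext nf witness) []"
proof -
  let ?w = "hom_ext nf witness"
  have "raag_eq EG ?w (concat (map (\<lambda>c. proj {x. T.colour x = c} ?w) (None # colours)))"
  proof (rule raag_eq_decomp[OF distinct_colours _ _ EG_sym])
    show "\<forall>x\<in>letters ?w. T.colour x \<in> set (None # colours)"
      using colour_in_colours by blast
    show "\<forall>x\<in>letters ?w. \<forall>y\<in>letters ?w. T.colour x \<noteq> T.colour y \<longrightarrow> commuting EG x y"
      using letters_image_factor[OF letters_witness] T.colour_commuting by blast
  qed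
  also have "raag_eq EG \<dots> []"
    by (rule raag_eq_concat_Nil) (use colour_class_of_witness_trivial in blast)
  finally show ?thesis .
qed

text \<open>The witness is nontrivial already in the free group on \<open>a = True\<close> and \<open>b = False\<close>,
  whose word problem is solved by free reduction: \<open>free_image\<close> sends \<open>v1 \<mapsto> a\<close>, \<open>v3 \<mapsto> a\<^sup>M\<close>
  with \<open>M = pivot_bound\<close>, \<open>v2 \<mapsto> b\<close> and all other generators to 1.  Each colour word becomes
  a power of \<open>a\<close>, and \<open>M\<close> is so large that none of these powers vanishes.\<close>

definition pivot_bound :: int where
  "pivot_bound = 1 + (\<Sum>z\<in>T.pivots. \<bar>expo v3 z\<bar>)"

definition free_image :: "nat \<times> nat \<Rightarrow> bool word" where
  "free_image v = (if v = v1 then gen_pow True 1 else if v = v3 then gen_pow True pivot_bound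
     else if v = v2 then [(False, False)] else [])"

definition colour_exp where
  "colour_exp c = (case c of Some (Inl b) \<Rightarrow> if b then pivot_bound else 1
     | Some (Inr z) \<Rightarrow> expo v3 z - expo v1 z * pivot_bound | None \<Rightarrow> 0)"

lemma free_image_factor:
  "free_image v1 = gen_pow True 1" "free_image v3 = gen_pow True pivot_bound"
  "free_image v2 = [(False, False)]"
  by (auto simp: free_image_def)

lemma pivot_bound_ge_1: "pivot_bound \<ge> 1"
  by (simp add: pivot_bound_def sum_nonneg)

lemma colour_exp_nonzero:
  assumes "c \<in> set colours"
  shows "colour_exp c \<noteq> 0"
proof -
  have bound: "\<bar>expo v3 z\<bar> < \<bar>expo v1 z * pivot_bound\<bar>" if z: "z \<in> T.pivots" for z
  proof -
    have "expo v1 z \<noteq> 0" using z T.pivots_subset by (auto simp: supp_def)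
    then have "pivot_bound \<le> \<bar>expo v1 z\<bar> * pivot_bound"
      using pivot_bound_ge_1 by (simp add: mult_le_cancel_right1)
    moreover have "\<bar>expo v3 z\<bar> \<le> (\<Sum>z\<in>T.pivots. \<bar>expo v3 z\<bar>)"
      by (rule member_le_sum) (use z T.finite_pivots in auto)
    ultimately show ?thesis by (simp add: pivot_bound_def abs_mult)
  qed
  from assms consider "c = Some (Inl True)" | "c = Some (Inl False)"
    | z where "z \<in> T.pivots" "c = Some (Inr z)"
    using pivot_list by (auto simp: colours_def)
  then show ?thesis
  proof cases
    case (3 z)
    then show ?thesis using bound[OF 3(1)] by (auto simp: colour_exp_def)
  qed (use pivot_bound_ge_1 in \<open>auto simp: colour_exp_def\<close>)
qed

lemma red_free_image_colour_word:
  assumes "c \<in> set colours"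
  shows "red (hom_ext free_image (colour_word c)) = gen_pow True (colour_exp c)"
proof -
  have pow: "hom_ext free_image (gen_pow v1 k) = gen_pow True k"
    "hom_ext free_image (gen_pow v3 k) = gen_pow True (k * pivot_bound)" for k
    using hom_ext_gen_pow_const[of free_image v1 True 1, OF free_image_factor(1)]
      hom_ext_gen_pow_const[of free_image v3 True pivot_bound, OF free_image_factor(2)]
    by auto
  from assms consider "c = Some (Inl True)" | "c = Some (Inl False)"
    | z where "c = Some (Inr z)"
    by (auto simp: colours_def)
  then show ?thesis
    by cases (auto simp: colour_word_def colour_exp_def pow[simplified] red_gen_pow_append
        red_reduced[OF reduced_gen_pow] algebra_simps)
qed

lemma red_free_image_commute:
  assumes "EL u u'"
  shows "red (hom_letter free_image (u, a) @ hom_letter free_image (u', b))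
       = red (hom_letter free_image (u', b) @ hom_letter free_image (u, a))"
proof (cases "free_image u = [] \<or> free_image u' = []")
  case True then show ?thesis by (auto simp: hom_letter_def)
next
  case False
  then have "u \<in> {v1, v2, v3}" "u' \<in> {v1, v2, v3}" by (auto simp: free_image_def split: if_splits)
  moreover have "u \<noteq> u'" using assms by (auto simp: join_pc_E_def)
  ultimately have "u \<in> {v1, v3}" "u' \<in> {v1, v3}" using assms EL_factor by auto
  moreover have "hom_letter free_image (v, d) = gen_pow True (if d then - k else k)"
    if "free_image v = gen_pow True k" for v d k
    using that by (simp add: hom_letter_def inv_word_gen_pow)
  ultimately obtain k1 k2 where "hom_letter free_image (u, a) = gen_pow True k1"
      "hom_letter free_image (u', b) = gen_pow True k2"
    using free_image_factor by blast
  then show ?thesis by (simp add: red_gen_pow_append add.commute)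
qed

lemma witness_nontrivial: "\<not> raag_eq EL witness []"
proof
  assume "raag_eq EL witness []"
  then have "red (hom_ext free_image witness) = red (hom_ext free_image [])"
    by (rule red_hom_ext_inv[rotated]) (rule red_free_image_commute)
  moreover have "red (hom_ext free_image witness) \<noteq> []"
    using nested_comm_red[of colours free_image colour_word colour_exp v2]
      red_free_image_colour_word colour_exp_nonzero free_image_factor(3)
    unfolding witness_def colours_def by auto
  ultimately show False by (simp add: red_def)
qed

lemma contradiction: False
  using nf_injective[of witness "[]"] letters_witness factor_in_VL witness_image_trivial witness_nontrivial
  by auto

end

context kk_hom
begin

lemma noncommuting_triple:
  assumes "i < m" and "n i = 3"
  shows "\<exists>s\<in>supp (i, 1). \<exists>t\<in>supp (i, 2). \<exists>r\<in>supp (i, 3).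
    \<not> commuting EG s t \<and> \<not> commuting EG t r \<and> s \<noteq> r"
proof (rule ccontr)
  assume "\<not> ?thesis"
  then interpret kk_hom_without_anti_path_3 m n VG EG \<psi> i
    using assms by unfold_locales blast+
  show False by (rule contradiction)
qed

section \<open>Anti-paths\<close>

definition supp_walk :: "nat \<Rightarrow> nat \<Rightarrow> (nat \<Rightarrow> 'b) \<Rightarrow> bool" where
  "supp_walk i N y \<longleftrightarrow> (\<forall>j. 1 \<le> j \<and> j \<le> N \<longrightarrow> y j \<in> supp (i, j))
     \<and> (\<forall>j. 1 \<le> j \<and> j < N \<longrightarrow> \<not> commuting EG (y j) (y (Suc j)))"

definition anti_path :: "nat \<Rightarrow> (nat \<Rightarrow> 'b) \<Rightarrow> bool" where
  "anti_path i y \<longleftrightarrow> supp_walk i (n i) y \<and> (\<forall>j k. 1 \<le> j \<and> k \<le> n i \<and> j + 2 \<le> k \<longrightarrow> y j \<noteq> y k)"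

lemma reach_supp_walk:
  assumes "t \<in> reach i k"
  shows "\<exists>y. y (k + 1) = t \<and> supp_walk i (k + 1) y"
  using assms
proof (induction k arbitrary: t)
  case 0
  then show ?case by (intro exI[of _ "\<lambda>_. t"]) (auto simp: supp_walk_def)
next
  case (Suc k)
  then obtain s where s: "s \<in> reach i k" "\<not> commuting EG s t" and t: "t \<in> supp (i, k + 2)"
    by auto
  obtain y where y: "y (k + 1) = s" "supp_walk i (k + 1) y" using Suc.IH[OF s(1)] by blast
  have "supp_walk i (Suc k + 1) (y(k + 2 := t))"
    unfolding supp_walk_def
  proof (intro conjI allI impI)
    fix j assume "1 \<le> j \<and> j \<le> Suc k + 1"
    then show "(y(k + 2 := t)) j \<in> supp (i, j)" using y(2) t by (auto simp: supp_walk_def)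
  next
    fix j assume j: "1 \<le> j \<and> j < Suc k + 1"
    show "\<not> commuting EG ((y(k + 2 := t)) j) ((y(k + 2 := t)) (Suc j))"
    proof (cases "j = k + 1")
      case True then show ?thesis using s y(1) by simp
    next
      case False then show ?thesis using y(2) j by (simp add: supp_walk_def)
    qed
  qed
  moreover have "(y(k + 2 := t)) (Suc k + 1) = t" by simp
  ultimately show ?case by blast
qed

text \<open>A repeated vertex \<open>y j = y l\<close> with \<open>l \<ge> j + 2\<close> would be a vertex of the walk failing to
  commute with a neighbour that lies far from it along the path: \<open>y (j + 1)\<close> if \<open>l \<ge> j + 3\<close>,
  and otherwise \<open>y (l + 1)\<close> or \<open>y (j - 1)\<close>, one of which exists unless \<open>n i = 3\<close>.\<close>

lemma supp_walk_far_distinct: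
  assumes i: "i < m" and "n i \<noteq> 3" and walk: "supp_walk i (n i) y"
    and jl: "1 \<le> j" "l \<le> n i" "j + 2 \<le> l"
  shows "y j \<noteq> y l"
proof
  assume eq: "y j = y l"
  have yS: "\<And>j. 1 \<le> j \<Longrightarrow> j \<le> n i \<Longrightarrow> y j \<in> supp (i, j)"
    and yD: "\<And>j. 1 \<le> j \<Longrightarrow> j < n i \<Longrightarrow> \<not> commuting EG (y j) (y (Suc j))"
    using walk by (auto simp: supp_walk_def)
  have far: "commuting EG (y a) (y b)" if "1 \<le> a" "b \<le> n i" "a + 2 \<le> b" for a b
    by (rule supp_far_commuting[OF i yS yS]) (use that in auto)
  consider "j + 3 \<le> l" | "l = j + 2" "l + 1 \<le> n i" | "l = j + 2" "2 \<le> j"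
    using jl \<open>n i \<noteq> 3\<close> by linarith
  then show False
  proof cases
    case 1
    then show False using yD[of j] far[of "Suc j" l] commuting_sym[of "y (Suc j)" "y l"] jl eq by auto
  next
    case 2
    then show False using yD[of l] far[of j "Suc l"] jl eq by auto
  next
    case 3
    then have "Suc (j - 1) = j" "1 \<le> j - 1" "j - 1 < n i" using jl by auto
    then have "\<not> commuting EG (y (j - 1)) (y j)" using yD[of "j - 1"] by simp
    moreover have "commuting EG (y (j - 1)) (y l)" using far[of "j - 1" l] 3 jl by simp
    ultimately show False using eq by simp
  qed
qed

lemma anti_path_exists:
  assumes i: "i < m" and "n i \<ge> 2"
  shows "\<exists>y. anti_path i y"
proof (cases "n i = 3")
  case True
  obtain s t r where str: "s \<in> supp (i, 1)" "t \<in> supp (i, 2)" "r \<in> supp (i, 3)"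
    "\<not> commuting EG s t" "\<not> commuting EG t r" "s \<noteq> r"
    using noncommuting_triple[OF i True] by blast
  have "anti_path i (\<lambda>j. if j = 1 then s else if j = 2 then t else r)"
    unfolding anti_path_def supp_walk_def
  proof (intro conjI allI impI)
    fix j assume "1 \<le> j \<and> j \<le> n i"
    then have "j = 1 \<or> j = 2 \<or> j = 3" using True by auto
    then show "(if j = 1 then s else if j = 2 then t else r) \<in> supp (i, j)" using str by auto
  next
    fix j assume "1 \<le> j \<and> j < n i"
    then have "j = 1 \<or> j = 2" using True by auto
    then show "\<not> commuting EG (if j = 1 then s else if j = 2 then t else r)
        (if Suc j = 1 then s else if Suc j = 2 then t else r)" using str by auto
  next
    fix j k assume "1 \<le> j \<and> k \<le> n i \<and> j + 2 \<le> k"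
    then have "j = 1" "k = 3" using True by auto
    then show "(if j = 1 then s else if j = 2 then t else r) \<noteq> (if k = 1 then s else if k = 2 then t else r)"
      using str by auto
  qed
  then show ?thesis by blast
next
  case False
  obtain k where k: "n i = k + 2" using le_Suc_ex[OF assms(2)] by (auto simp: add.commute)
  then obtain t where "t \<in> reach i (Suc k)" using reach_nonempty[OF i] by fastforce
  then obtain y where "supp_walk i (n i) y" using reach_supp_walk k by fastforce
  then show ?thesis using supp_walk_far_distinct[OF i False] by (auto simp: anti_path_def)
qed

section \<open>Singleton factors\<close>

definition singleton_factors :: "nat set" where "singleton_factors = {i. i < m \<and> n i = 1}"

lemma letters_concat_gen_pow: "letters (concat (map (\<lambda>i. gen_pow (f i) (c i)) xs)) \<subseteq> f ` set xs"
proof (induction xs)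
  case (Cons a xs)
  then show ?case using letters_gen_pow[of "f a" "c a"] by auto
qed simp

lemma exp_sum_concat_gen_pow:
  assumes "distinct Ks"
  shows "exp_sum (concat (map (\<lambda>i. gen_pow (i, 1::nat) (c i)) Ks)) (i0, 1) = (if i0 \<in> set Ks then c i0 else 0)"
  using assms by (induction Ks) (auto simp: exp_sum_gen_pow)

lemma singleton_supp_clique: "clique EG (\<Union>i\<in>singleton_factors. supp (i, 1))"
  unfolding clique_def
proof (intro ballI)
  fix x y assume "x \<in> (\<Union>i\<in>singleton_factors. supp (i, 1))" "y \<in> (\<Union>i\<in>singleton_factors. supp (i, 1))"
  then obtain i k where ik: "i \<in> singleton_factors" "k \<in> singleton_factors" "x \<in> supp (i, 1)" "y \<in> supp (k, 1)"
    by blast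
  then have VL: "(i, 1) \<in> VL" "(k, 1) \<in> VL" by (auto simp: singleton_factors_def join_pc_V_def)
  show "commuting EG x y"
  proof (cases "i = k")
    case True then show ?thesis using supp_clique[OF VL(1)] ik by (auto simp: clique_def)
  next
    case False
    then have "EL (i, 1) (k, 1)" using VL by (auto simp: join_pc_E_def)
    then show ?thesis using adjacent_supp_commuting[OF VL] ik by blast
  qed
qed

text \<open>The singleton factors span a free abelian subgroup of \<open>A(\<Lambda>)\<close> which \<open>\<psi>\<close> maps injectively
  into the free abelian group on their (pairwise commuting) supports.\<close>

lemma card_singleton_factors_le:
  assumes R: "finite R" "(\<Union>i\<in>singleton_factors. supp (i, 1)) \<subseteq> R"
  shows "card singleton_factors \<le> card R"
proof (rule ccontr)
  assume "\<not> ?thesis"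
  then have lt: "card R < card singleton_factors" by simp
  have fin: "finite singleton_factors" by (simp add: singleton_factors_def)
  have "\<forall>i\<in>singleton_factors. \<forall>x. x \<notin> R \<longrightarrow> expo (i, 1) x = 0"
    using R(2) by (auto simp: supp_def)
  then obtain c where c: "\<exists>i\<in>singleton_factors. c i \<noteq> 0"
    "\<forall>x. (\<Sum>i\<in>singleton_factors. c i * expo (i, 1) x) = 0"
    using int_linear_dependence[OF R(1) fin lt, of "\<lambda>i. expo (i, 1)"] by blast
  obtain Ks where Ks: "distinct Ks" "set Ks = singleton_factors"
    using finite_distinct_list[OF fin] by blast
  define w where "w = concat (map (\<lambda>i. gen_pow (i, 1::nat) (c i)) Ks)"
  have "letters w \<subseteq> (\<lambda>i. (i, 1)) ` singleton_factors"
    using letters_concat_gen_pow Ks(2) unfolding w_def by metis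
  then have w_VL: "letters w \<subseteq> VL" by (auto simp: singleton_factors_def join_pc_V_def)
  have "raag_eq EG (hom_ext nf w) []"
  proof (rule clique_eq_Nil[OF singleton_supp_clique])
    show "finite (\<Union>i\<in>singleton_factors. supp (i, 1))" using fin finite_supp by simp
    show "letters (hom_ext nf w) \<subseteq> (\<Union>i\<in>singleton_factors. supp (i, 1))"
      using letters_hom_ext_nf[of w] \<open>letters w \<subseteq> (\<lambda>i. (i, 1)) ` singleton_factors\<close> by blast
    have "exp_sum (hom_ext nf w) x = (\<Sum>i\<leftarrow>Ks. c i * expo (i, 1) x)" for x
      unfolding w_def by (induction Ks) (auto simp: exp_sum_hom_ext_gen_pow exp_sum_nf)
    then show "exp_sum (hom_ext nf w) x = 0" for x
      using c(2) Ks by (simp add: sum_list_distinct_conv_sum_set)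
  qed
  then have "exp_sum w = exp_sum ([] :: (nat \<times> nat) word)"
    using nf_injective[OF w_VL, of "[]"] raag_eq_exp_sum by simp
  moreover obtain i0 where "i0 \<in> singleton_factors" "c i0 \<noteq> 0" using c(1) by blast
  then have "exp_sum w (i0, 1) \<noteq> 0"
    using exp_sum_concat_gen_pow[OF Ks(1), of c i0] Ks(2) by (simp add: w_def)
  ultimately show False by simp
qed

section \<open>The embedding\<close>

definition factor_supp :: "nat \<Rightarrow> 'b set" where "factor_supp i = (\<Union>j\<in>{1..n i}. supp (i, j))"
definition total_supp :: "'b set" where "total_supp = (\<Union>v\<in>VL. supp v)"
definition central_supp :: "'b set" where "central_supp = {z \<in> total_supp. \<forall>y\<in>total_supp. commuting EG z y}"
definition pool :: "'b set" where "pool = central_supp \<union> (\<Union>i\<in>singleton_factors. factor_supp i)"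

lemma hom_supp_total_supp: "hom_supp VL EG \<psi> = total_supp"
  unfolding hom_supp_def total_supp_def by (rule SUP_cong[OF refl]) (rule raag_supp_psi)

lemma supp_factor_supp: "1 \<le> j \<Longrightarrow> j \<le> n i \<Longrightarrow> supp (i, j) \<subseteq> factor_supp i"
  by (auto simp: factor_supp_def)

lemma factor_supp_total_supp: "i < m \<Longrightarrow> factor_supp i \<subseteq> total_supp"
  by (auto simp: factor_supp_def total_supp_def join_pc_V_def)

lemma total_supp_subset_VG: "total_supp \<subseteq> VG" using supp_subset_VG by (auto simp: total_supp_def)

lemma finite_total_supp: "finite total_supp" using finite_subset[OF total_supp_subset_VG finite_VG] .

lemma factor_supp_commuting:
  assumes "i < m" "k < m" "i \<noteq> k" "x \<in> factor_supp i" "y \<in> factor_supp k"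
  shows "commuting EG x y"
proof -
  obtain j l where jl: "1 \<le> j" "j \<le> n i" "x \<in> supp (i, j)" "1 \<le> l" "l \<le> n k" "y \<in> supp (k, l)"
    using assms(4,5) by (auto simp: factor_supp_def)
  have v: "(i, j) \<in> VL" "(k, l) \<in> VL" using assms jl by (auto simp: join_pc_V_def)
  have "EL (i, j) (k, l)" using v assms(3) by (auto simp: join_pc_E_def)
  then show ?thesis using adjacent_supp_commuting[OF v] jl by blast
qed

lemma factor_supp_inter_central:
  assumes "i < m" "k < m" "i \<noteq> k" "x \<in> factor_supp i" "x \<in> factor_supp k"
  shows "x \<in> central_supp"
proof -
  have "x \<in> total_supp" using assms factor_supp_total_supp by blast
  moreover have "commuting EG x y" if y: "y \<in> total_supp" for y
  proof -
    obtain l j where lj: "(l, j) \<in> VL" "y \<in> supp (l, j)" using y by (auto simp: total_supp_def)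
    then have l: "l < m" "y \<in> factor_supp l" using supp_factor_supp by (auto simp: join_pc_V_def)
    show ?thesis
    proof (cases "l = i")
      case True
      then show ?thesis using factor_supp_commuting[OF assms(2) l(1) _ assms(5) l(2)] assms(3) by blast
    next
      case False
      then show ?thesis using factor_supp_commuting[OF assms(1) l(1) _ assms(4) l(2)] by blast
    qed
  qed
  ultimately show ?thesis by (simp add: central_supp_def)
qed

lemma anti_path_not_central:
  assumes i: "i < m" "n i \<ge> 2" and p: "anti_path i y" and j: "1 \<le> j" "j \<le> n i"
  shows "y j \<notin> central_supp"
proof
  assume central: "y j \<in> central_supp"
  have yS: "\<And>j. 1 \<le> j \<Longrightarrow> j \<le> n i \<Longrightarrow> y j \<in> supp (i, j)"
    and yD: "\<And>j. 1 \<le> j \<Longrightarrow> j < n i \<Longrightarrow> \<not> commuting EG (y j) (y (Suc j))"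
    using p by (auto simp: anti_path_def supp_walk_def)
  have comm: "commuting EG (y j) (y k)" if "1 \<le> k" "k \<le> n i" for k
    using central yS[OF that] supp_factor_supp[OF that] factor_supp_total_supp[OF i(1)]
    by (auto simp: central_supp_def)
  show False
  proof (cases "j < n i")
    case True
    then show False using yD[of j] comm[of "Suc j"] j by simp
  next
    case False
    then have "Suc (j - 1) = j" "1 \<le> j - 1" "j - 1 < n i" using i j by auto
    then show False using yD[of "j - 1"] comm[of "j - 1"] commuting_sym[of "y j" "y (j - 1)"] by simp
  qed
qed

definition path_choice :: "nat \<Rightarrow> nat \<Rightarrow> 'b" where "path_choice i = (SOME y. anti_path i y)"

lemma anti_path_choice: "i < m \<Longrightarrow> n i \<ge> 2 \<Longrightarrow> anti_path i (path_choice i)"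
proof -
  assume a: "i < m" "n i \<ge> 2"
  obtain y where "anti_path i y" using anti_path_exists[OF a] by blast
  then show ?thesis unfolding path_choice_def using someI[of "anti_path i" y] by simp
qed

lemma pool_subset_total_supp: "pool \<subseteq> total_supp"
  using factor_supp_total_supp by (auto simp: pool_def central_supp_def singleton_factors_def)

lemma finite_pool: "finite pool"
  using finite_subset[OF pool_subset_total_supp finite_total_supp] .

lemma singleton_factors_factor_supp: "i \<in> singleton_factors \<Longrightarrow> factor_supp i = supp (i, 1)"
  by (auto simp: singleton_factors_def factor_supp_def)

lemma pool_injection: "\<exists>\<rho>. \<rho> ` singleton_factors \<subseteq> pool \<and> inj_on \<rho> singleton_factors"
proof (rule card_le_inj)
  show "finite singleton_factors" by (simp add: singleton_factors_def)
  show "finite pool" by (rule finite_pool)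
  show "card singleton_factors \<le> card pool"
    by (rule card_singleton_factors_le[OF finite_pool]) (auto simp: pool_def singleton_factors_factor_supp)
qed

lemma path_choice_props:
  assumes "i < m" "n i \<ge> 2" "1 \<le> j" "j \<le> n i"
  shows "path_choice i j \<in> supp (i, j) \<and> path_choice i j \<in> factor_supp i \<and> path_choice i j \<notin> central_supp"
proof -
  have path: "anti_path i (path_choice i)" by (rule anti_path_choice[OF assms(1,2)])
  then have "path_choice i j \<in> supp (i, j)" using assms(3,4) unfolding anti_path_def supp_walk_def by blast
  moreover have "supp (i, j) \<subseteq> factor_supp i" by (rule supp_factor_supp[OF assms(3,4)])
  moreover have "path_choice i j \<notin> central_supp" by (rule anti_path_not_central[OF assms(1,2) path assms(3,4)])
  ultimately show ?thesis by blast
qed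

lemma pool_commuting:
  assumes "r \<in> pool" "r' \<in> pool"
  shows "commuting EG r r'"
proof -
  have central: "commuting EG z y" if "z \<in> central_supp" "y \<in> pool" for z y
    using that pool_subset_total_supp by (auto simp: central_supp_def)
  have singletons: "commuting EG r r'"
    if "i \<in> singleton_factors" "k \<in> singleton_factors" "r \<in> factor_supp i" "r' \<in> factor_supp k" for i k
  proof (cases "i = k")
    case True
    then show ?thesis
      using that supp_clique[of "(i, 1)"] singleton_factors_factor_supp
      by (auto simp: singleton_factors_def join_pc_V_def clique_def)
  next
    case False
    then show ?thesis using that factor_supp_commuting by (auto simp: singleton_factors_def)
  qed
  show ?thesis
    using assms central[of r r'] central[of r' r, THEN commuting_sym] singletons
    by (auto simp: pool_def)
qed

lemma pool_commuting_noncentral: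
  assumes r: "r \<in> pool" and k: "k < m" and p: "p \<in> factor_supp k" "p \<notin> central_supp"
    and "n k \<noteq> 1"
  shows "r \<noteq> p \<and> commuting EG r p"
proof (cases "r \<in> central_supp")
  case True
  have "p \<in> total_supp" using p factor_supp_total_supp k by blast
  then show ?thesis using True p(2) by (auto simp: central_supp_def)
next
  case False
  then obtain i where i: "i \<in> singleton_factors" "r \<in> factor_supp i" using r by (auto simp: pool_def)
  then have ik: "i \<noteq> k" "i < m" using assms by (auto simp: singleton_factors_def)
  show ?thesis
    using factor_supp_commuting[OF ik(2) k ik(1) i(2) p(1)]
      factor_supp_inter_central[OF ik(2) k ik(1) i(2)] p by blast
qed

lemma in_VL: "p \<in> VL \<longleftrightarrow> fst p < m \<and> 1 \<le> snd p \<and> snd p \<le> n (fst p)"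
  by (cases p) (simp add: join_pc_V_def)

lemma anti_path_adjacency_forward:
  assumes "i < m" "anti_path i y" "1 \<le> j" "j < l" "l \<le> n i"
  shows "y j \<noteq> y l \<and> (EG (y j) (y l) \<longleftrightarrow> EL (i, j) (i, l))"
proof (cases "l = Suc j")
  case True
  then have "\<not> commuting EG (y j) (y l)" using assms by (auto simp: anti_path_def supp_walk_def)
  then show ?thesis using True by (auto simp: commuting_def join_pc_E_def)
next
  case False
  then have "j + 2 \<le> l" using assms(4) by simp
  then show ?thesis
    using assms supp_far_commuting[OF assms(1), of "y j" j "y l" l] EL_same_factor_far[of i j l]
    by (auto simp: anti_path_def supp_walk_def commuting_def join_pc_E_def)
qed

lemma anti_path_adjacency:
  assumes "i < m" "anti_path i y" "1 \<le> j" "j \<le> n i" "1 \<le> l" "l \<le> n i" "j \<noteq> l"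
  shows "y j \<noteq> y l \<and> (EG (y j) (y l) \<longleftrightarrow> EL (i, j) (i, l))"
proof (cases "j < l")
  case True
  then show ?thesis using anti_path_adjacency_forward assms by blast
next
  case False
  then have "y l \<noteq> y j \<and> (EG (y l) (y j) \<longleftrightarrow> EL (i, l) (i, j))"
    using anti_path_adjacency_forward assms by simp
  then show ?thesis using EG_sym by (auto simp: join_pc_E_def)
qed

definition pool_choice :: "nat \<Rightarrow> 'b" where
  "pool_choice = (SOME \<rho>. \<rho> ` singleton_factors \<subseteq> pool \<and> inj_on \<rho> singleton_factors)"

lemma pool_choice: "pool_choice ` singleton_factors \<subseteq> pool" "inj_on pool_choice singleton_factors"
  using someI_ex[OF pool_injection] by (auto simp: pool_choice_def)

definition embedding :: "nat \<times> nat \<Rightarrow> 'b" where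
  "embedding p = (if n (fst p) = 1 then pool_choice (fst p) else path_choice (fst p) (snd p))"

lemma embedding_singleton_factor:
  "p \<in> VL \<Longrightarrow> n (fst p) = 1 \<Longrightarrow> embedding p \<in> pool"
  using pool_choice(1) by (auto simp: embedding_def singleton_factors_def in_VL)

lemma embedding_long_factor:
  assumes "p \<in> VL" "n (fst p) \<noteq> 1"
  shows "embedding p \<in> factor_supp (fst p) - central_supp"
  using path_choice_props[of "fst p" "snd p"] assms by (auto simp: embedding_def in_VL)

lemma embedding_total_supp:
  assumes "p \<in> VL"
  shows "embedding p \<in> total_supp"
proof (cases "n (fst p) = 1")
  case True
  then show ?thesis using embedding_singleton_factor[OF assms] pool_subset_total_supp by blast
next
  case False
  then show ?thesis
    using embedding_long_factor[OF assms] factor_supp_total_supp assms by (auto simp: in_VL)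
qed

lemma embedding_other_factor:
  assumes p: "p \<in> VL" and q: "q \<in> VL" and pq: "fst p \<noteq> fst q"
  shows "embedding p \<noteq> embedding q \<and> commuting EG (embedding p) (embedding q)"
proof -
  have m: "fst p < m" "fst q < m" using p q by (auto simp: in_VL)
  consider "n (fst p) = 1" "n (fst q) = 1" | "n (fst p) = 1" "n (fst q) \<noteq> 1"
    | "n (fst p) \<noteq> 1" "n (fst q) = 1" | "n (fst p) \<noteq> 1" "n (fst q) \<noteq> 1" by blast
  then show ?thesis
  proof cases
    case 1
    then have sp: "fst p \<in> singleton_factors" and sq: "fst q \<in> singleton_factors"
      using m by (auto simp: singleton_factors_def)
    have "pool_choice (fst p) \<noteq> pool_choice (fst q)"
      using pq inj_onD[OF pool_choice(2) _ sp sq] by blast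
    moreover have "commuting EG (pool_choice (fst p)) (pool_choice (fst q))"
      using pool_commuting pool_choice(1) sp sq by blast
    ultimately show ?thesis using 1 by (simp add: embedding_def)
  next
    case 2
    have "embedding q \<in> factor_supp (fst q)" "embedding q \<notin> central_supp"
      using embedding_long_factor[OF q 2(2)] by simp_all
    from pool_commuting_noncentral[OF embedding_singleton_factor[OF p 2(1)] m(2) this 2(2)]
    show ?thesis .
  next
    case 3
    have "embedding p \<in> factor_supp (fst p)" "embedding p \<notin> central_supp"
      using embedding_long_factor[OF p 3(1)] by simp_all
    from pool_commuting_noncentral[OF embedding_singleton_factor[OF q 3(2)] m(1) this 3(1)]
    show ?thesis by (auto dest: commuting_sym)
  next
    case 4
    have p': "embedding p \<in> factor_supp (fst p)" "embedding p \<notin> central_supp"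
      using embedding_long_factor[OF p 4(1)] by simp_all
    have q': "embedding q \<in> factor_supp (fst q)"
      using embedding_long_factor[OF q 4(2)] by simp
    have "embedding p \<noteq> embedding q"
    proof
      assume "embedding p = embedding q"
      then have "embedding p \<in> factor_supp (fst q)" using q' by simp
      then show False using factor_supp_inter_central[OF m pq p'(1)] p'(2) by blast
    qed
    then show ?thesis using factor_supp_commuting[OF m pq p'(1) q'] by blast
  qed
qed

lemma embedding_same_factor:
  assumes p: "p \<in> VL" and q: "q \<in> VL" and "fst p = fst q" "p \<noteq> q"
  shows "embedding p \<noteq> embedding q \<and> (EG (embedding p) (embedding q) \<longleftrightarrow> EL p q)"
proof -
  obtain i j l where ij: "p = (i, j)" and il: "q = (i, l)" and "j \<noteq> l"
    using assms by (cases p, cases q) auto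
  then have bounds: "i < m" "1 \<le> j" "j \<le> n i" "1 \<le> l" "l \<le> n i" and "n i \<noteq> 1"
    using p q by (auto simp: in_VL)
  then have "anti_path i (path_choice i)" using anti_path_choice by simp
  from anti_path_adjacency[OF bounds(1) this bounds(2-5) \<open>j \<noteq> l\<close>]
  show ?thesis using \<open>n i \<noteq> 1\<close> by (simp add: embedding_def ij il)
qed

lemma full_embedding_embedding: "full_embedding VL EL VG EG embedding"
  unfolding full_embedding_def
proof (intro conjI ballI)
  have pair: "embedding p \<noteq> embedding q \<and> (EG (embedding p) (embedding q) \<longleftrightarrow> EL p q)"
    if "p \<in> VL" "q \<in> VL" "p \<noteq> q" for p q
  proof (cases "fst p = fst q")
    case True
    then show ?thesis using embedding_same_factor that by blast
  next
    case False
    then have "EL p q" using that by (auto simp: join_pc_E_def)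
    then show ?thesis using embedding_other_factor[OF that(1,2) False] by (auto simp: commuting_def)
  qed
  show "inj_on embedding VL" using pair by (auto simp: inj_on_def)
  show "embedding ` VL \<subseteq> VG" using embedding_total_supp total_supp_subset_VG by blast
  show "EG (embedding u) (embedding v) = EL u v" if "u \<in> VL" "v \<in> VL" for u v
    using pair[OF that] EG_irrefl by (cases "u = v") (auto simp: join_pc_E_def)
qed

end

theorem lemma4p4:
  fixes m :: nat and n :: "nat \<Rightarrow> nat"
    and VG :: "'b set" and EG :: "'b \<Rightarrow> 'b \<Rightarrow> bool"
    and \<psi> :: "nat \<times> nat \<Rightarrow> 'b word"
  assumes "\<forall>i<m. n i \<ge> 1"
    and "finite_simple_graph VG EG"
    and "raag_hom (join_pc_V m n) (join_pc_E m n) VG EG \<psi>"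
    and "raag_hom_injective (join_pc_V m n) (join_pc_E m n) EG \<psi>"
    and "KK_condition (join_pc_V m n) EG \<psi>"
  shows "\<exists>\<iota>. full_embedding (join_pc_V m n) (join_pc_E m n) VG EG \<iota>
           \<and> \<iota> ` join_pc_V m n \<subseteq> hom_supp (join_pc_V m n) EG \<psi>"
proof -
  interpret kk_hom m n VG EG \<psi> using assms(2-5) by unfold_locales
  have "embedding ` join_pc_V m n \<subseteq> hom_supp (join_pc_V m n) EG \<psi>"
    using embedding_total_supp hom_supp_total_supp by blast
  then show ?thesis using full_embedding_embedding by blast
qed

end
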